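(* Let $M$ be a regular indecomposable representation of $(T(n),\Omega)$ which is a flow module, and let $(a_0,\dots,a_d)$, $d=2r+1$, be a diameter path of $M$ with $a_0$ a sink and $a_d$ a source of $\Omega$. Then $d(M)\le d(\sigma M)\le d(M)+1$, and: (4) if $d(\sigma M)=d(M)$, then $\sigma M$ is a flow module, and for any neighbour $a_{d+1}$ of $a_d$ different from $a_{d-1}$ the path $(a_1,\dots,a_{d+1})$ is a diameter path of $\sigma M$; in particular the center of $\sigma M$ is $\{a_{r+1},a_{r+2}\}$; (5) if $d(\sigma M)=d(M)+1$, then $\sigma M$ is a source module with center $a_{r+1}$.
   Context: Let $k$ be a field and $n\ge 3$. $T(n)$ is the $n$-regular tree; fix a bipartite orientation $\Omega$ (every vertex a sink or a source), $\sigma\Omega$ the opposite orientation. A module is a finite-dimensional $k$-representation of $(T(n),\Omega)$ or $(T(n),\sigma\Omega)$. The shift functor $\sigma$ is the composition of the Bernstein–Gelfand–Ponomarev reflection functors at all sinks, sending representations of $(T(n),\Omega)$ to representations of $(T(n),\sigma\Omega)$ and vice versa. An indecomposable module $M$ is regular if $\sigma^tM\neq 0$ for all $t\in\mathbb Z$ ($\sigma^t$ for $t<0$ being powers of the left adjoint $\sigma^-$). A path of length $t$ is a sequence $(a_0,\dots,a_t)$ of vertices, consecutive ones neighbours, with $a_{i-1}\neq a_{i+1}$; a path of length $2r$ has center $a_r$, radius $r$; a path of length $2r+1$ has center the edge $\{a_r,a_{r+1}\}$, radius $r$. For indecomposable $M$, $T(M)$ is the full subgraph on vertices $a$ with $M_a\neq0$;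 a diameter path is a path in $T(M)$ of maximal length $d(M)$; all diameter paths share a center, the center of $M$; $r(M)=\lfloor d(M)/2\rfloor$. $M$ is a sink (resp. source) module if its diameter paths start and end at sinks (resp. sources) of the orientation of its quiver, and a flow module if $d(M)$ is odd. *)

theory Defs
  imports "Jordan_Normal_Form.Matrix"
begin

definition is_path :: "('v \<Rightarrow> 'v \<Rightarrow> bool) \<Rightarrow> 'v list \<Rightarrow> bool" where
  "is_path adj p \<longleftrightarrow> p \<noteq> [] \<and>
     (\<forall>i. Suc i < length p \<longrightarrow> adj (p ! i) (p ! Suc i)) \<and>
     (\<forall>i. i + 2 < length p \<longrightarrow> p ! i \<noteq> p ! (i + 2))"

text \<open>adj is (isomorphic to) the n-regular tree T(n): symmetric, irreflexive, every vertex has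
  exactly n neighbours, connected, and without reduced closed walks.\<close>
definition regular_tree :: "nat \<Rightarrow> ('v \<Rightarrow> 'v \<Rightarrow> bool) \<Rightarrow> bool" where
  "regular_tree n adj \<longleftrightarrow>
     (\<forall>x y. adj x y \<longrightarrow> adj y x) \<and> (\<forall>x. \<not> adj x x) \<and>
     (\<forall>x. finite {y. adj x y} \<and> card {y. adj x y} = n) \<and>
     (\<forall>x y. \<exists>p. is_path adj p \<and> hd p = x \<and> last p = y) \<and>
     (\<forall>p. is_path adj p \<and> 2 \<le> length p \<longrightarrow> hd p \<noteq> last p)"

text \<open>A bipartite orientation is given by its set of sinks snk: every edge joins a sink and a
  source; the arrow goes from the source to the sink. The opposite orientation has sinks
  (\<lambda>a. \<not> snk a).\<close>
definition bipartite_orientation :: "('v \<Rightarrow> 'v \<Rightarrow> bool) \<Rightarrow> ('v \<Rightarrow> bool) \<Rightarrow> bool" where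
  "bipartite_orientation adj snk \<longleftrightarrow> (\<forall>x y. adj x y \<longrightarrow> (snk x \<longleftrightarrow> \<not> snk y))"

text \<open>A representation: at vertex a the space k^(dimv a); for an arrow y \<rightarrow> x the matrix
  mapv y x (of size dimv x \<times> dimv y).\<close>
record ('v, 'k) rep =
  dimv :: "'v \<Rightarrow> nat"
  mapv :: "'v \<Rightarrow> 'v \<Rightarrow> 'k mat"

definition supp :: "('v, 'k) rep \<Rightarrow> 'v set" where
  "supp M = {a. dimv M a \<noteq> 0}"

definition is_zero_rep :: "('v, 'k) rep \<Rightarrow> bool" where
  "is_zero_rep M \<longleftrightarrow> supp M = {}"

definition wf_rep :: "('v \<Rightarrow> 'v \<Rightarrow> bool) \<Rightarrow> ('v \<Rightarrow> bool) \<Rightarrow> ('v, 'k) rep \<Rightarrow> bool" where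
  "wf_rep adj snk M \<longleftrightarrow> finite (supp M) \<and>
     (\<forall>x y. adj y x \<and> snk x \<longrightarrow> mapv M y x \<in> carrier_mat (dimv M x) (dimv M y))"

definition subsp :: "nat \<Rightarrow> 'k::field vec set \<Rightarrow> bool" where
  "subsp d U \<longleftrightarrow> U \<subseteq> carrier_vec d \<and> 0\<^sub>v d \<in> U \<and> (\<forall>u\<in>U. \<forall>v\<in>U. u + v \<in> U) \<and>
     (\<forall>c. \<forall>u\<in>U. c \<cdot>\<^sub>v u \<in> U)"

definition indecomposable ::
  "('v \<Rightarrow> 'v \<Rightarrow> bool) \<Rightarrow> ('v \<Rightarrow> bool) \<Rightarrow> ('v, 'k::field) rep \<Rightarrow> bool" where
  "indecomposable adj snk M \<longleftrightarrow> \<not> is_zero_rep M \<and>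
     \<not> (\<exists>U W. (\<forall>a. subsp (dimv M a) (U a) \<and> subsp (dimv M a) (W a) \<and>
                   U a \<inter> W a = {0\<^sub>v (dimv M a)} \<and>
                   (\<forall>v\<in>carrier_vec (dimv M a). \<exists>u\<in>U a. \<exists>w\<in>W a. v = u + w)) \<and>
              (\<forall>x y. adj y x \<and> snk x \<longrightarrow>
                   (\<forall>u\<in>U y. mapv M y x *\<^sub>v u \<in> U x) \<and> (\<forall>w\<in>W y. mapv M y x *\<^sub>v w \<in> W x)) \<and>
              (\<exists>a. U a \<noteq> {0\<^sub>v (dimv M a)}) \<and> (\<exists>a. W a \<noteq> {0\<^sub>v (dimv M a)}))"

text \<open>N is a BGP reflection of M (a representation of the orientation with sinks snk) at all
  sinks: N is a representation of the opposite orientation, equal to M at sources, and at each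
  sink y the sequence 0 \<rightarrow> N_y \<rightarrow> (\<Oplus>_(x adj y) M_x) \<rightarrow> M_y is exact.\<close>
definition is_reflection ::
  "('v \<Rightarrow> 'v \<Rightarrow> bool) \<Rightarrow> ('v \<Rightarrow> bool) \<Rightarrow> ('v, 'k::field) rep \<Rightarrow> ('v, 'k) rep \<Rightarrow> bool" where
  "is_reflection adj snk M N \<longleftrightarrow> wf_rep adj (\<lambda>a. \<not> snk a) N \<and>
     (\<forall>a. \<not> snk a \<longrightarrow> dimv N a = dimv M a) \<and>
     (\<forall>y. snk y \<longrightarrow>
        (\<forall>v\<in>carrier_vec (dimv N y).
            (\<forall>x. adj y x \<longrightarrow> mapv N y x *\<^sub>v v = 0\<^sub>v (dimv M x)) \<longrightarrow> v = 0\<^sub>v (dimv N y)) \<and>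
        (\<forall>u. (\<forall>x. adj y x \<longrightarrow> u x \<in> carrier_vec (dimv M x)) \<longrightarrow>
            ((\<forall>i < dimv M y. (\<Sum>x\<in>{x. adj y x}. (mapv M x y *\<^sub>v u x) $ i) = 0) \<longleftrightarrow>
             (\<exists>v\<in>carrier_vec (dimv N y). \<forall>x. adj y x \<longrightarrow> u x = mapv N y x *\<^sub>v v))))"

text \<open>N is a BGP co-reflection of M at all sources: N is a representation of the opposite
  orientation, equal to M at sinks, and at each source y the sequence
  M_y \<rightarrow> (\<Oplus>_(x adj y) M_x) \<rightarrow> N_y \<rightarrow> 0 is exact.\<close>
definition is_coreflection ::
  "('v \<Rightarrow> 'v \<Rightarrow> bool) \<Rightarrow> ('v \<Rightarrow> bool) \<Rightarrow> ('v, 'k::field) rep \<Rightarrow> ('v, 'k) rep \<Rightarrow> bool" where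
  "is_coreflection adj snk M N \<longleftrightarrow> wf_rep adj (\<lambda>a. \<not> snk a) N \<and>
     (\<forall>a. snk a \<longrightarrow> dimv N a = dimv M a) \<and>
     (\<forall>y. \<not> snk y \<longrightarrow>
        (\<forall>w\<in>carrier_vec (dimv N y). \<exists>u. (\<forall>x. adj y x \<longrightarrow> u x \<in> carrier_vec (dimv M x)) \<and>
            (\<forall>i < dimv N y. w $ i = (\<Sum>x\<in>{x. adj y x}. (mapv N x y *\<^sub>v u x) $ i))) \<and>
        (\<forall>u. (\<forall>x. adj y x \<longrightarrow> u x \<in> carrier_vec (dimv M x)) \<longrightarrow>
            ((\<forall>i < dimv N y. (\<Sum>x\<in>{x. adj y x}. (mapv N x y *\<^sub>v u x) $ i) = 0) \<longleftrightarrow>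
             (\<exists>v\<in>carrier_vec (dimv M y). \<forall>x. adj y x \<longrightarrow> u x = mapv M y x *\<^sub>v v))))"

text \<open>The shift functor sigma and its left adjoint sigma^- (defined up to isomorphism).\<close>
definition shift :: "('v \<Rightarrow> 'v \<Rightarrow> bool) \<Rightarrow> ('v \<Rightarrow> bool) \<Rightarrow> ('v, 'k::field) rep \<Rightarrow> ('v, 'k) rep" where
  "shift adj snk M = (SOME N. is_reflection adj snk M N)"

definition coshift :: "('v \<Rightarrow> 'v \<Rightarrow> bool) \<Rightarrow> ('v \<Rightarrow> bool) \<Rightarrow> ('v, 'k::field) rep \<Rightarrow> ('v, 'k) rep" where
  "coshift adj snk M = (SOME N. is_coreflection adj snk M N)"

fun shift_pow :: "('v \<Rightarrow> 'v \<Rightarrow> bool) \<Rightarrow> ('v \<Rightarrow> bool) \<Rightarrow> nat \<Rightarrow> ('v, 'k::field) rep \<Rightarrow> ('v, 'k) rep" where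
  "shift_pow adj snk 0 M = M"
| "shift_pow adj snk (Suc t) M = shift_pow adj (\<lambda>a. \<not> snk a) t (shift adj snk M)"

fun coshift_pow :: "('v \<Rightarrow> 'v \<Rightarrow> bool) \<Rightarrow> ('v \<Rightarrow> bool) \<Rightarrow> nat \<Rightarrow> ('v, 'k::field) rep \<Rightarrow> ('v, 'k) rep" where
  "coshift_pow adj snk 0 M = M"
| "coshift_pow adj snk (Suc t) M = coshift_pow adj (\<lambda>a. \<not> snk a) t (coshift adj snk M)"

definition regular_rep :: "('v \<Rightarrow> 'v \<Rightarrow> bool) \<Rightarrow> ('v \<Rightarrow> bool) \<Rightarrow> ('v, 'k::field) rep \<Rightarrow> bool" where
  "regular_rep adj snk M \<longleftrightarrow>
     (\<forall>t. \<not> is_zero_rep (shift_pow adj snk t M) \<and> \<not> is_zero_rep (coshift_pow adj snk t M))"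

definition diam :: "('v \<Rightarrow> 'v \<Rightarrow> bool) \<Rightarrow> ('v, 'k) rep \<Rightarrow> nat" where
  "diam adj M = Max {length p - 1 | p. is_path adj p \<and> set p \<subseteq> supp M}"

definition diam_path :: "('v \<Rightarrow> 'v \<Rightarrow> bool) \<Rightarrow> ('v, 'k) rep \<Rightarrow> 'v list \<Rightarrow> bool" where
  "diam_path adj M p \<longleftrightarrow> is_path adj p \<and> set p \<subseteq> supp M \<and> length p - 1 = diam adj M"

definition path_center :: "'v list \<Rightarrow> 'v set" where
  "path_center p = (let t = length p - 1; r = t div 2 in
      if even t then {p ! r} else {p ! r, p ! (r + 1)})"

definition center :: "('v \<Rightarrow> 'v \<Rightarrow> bool) \<Rightarrow> ('v, 'k) rep \<Rightarrow> 'v set" where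
  "center adj M = path_center (SOME p. diam_path adj M p)"

definition flow_module :: "('v \<Rightarrow> 'v \<Rightarrow> bool) \<Rightarrow> ('v, 'k) rep \<Rightarrow> bool" where
  "flow_module adj M \<longleftrightarrow> odd (diam adj M)"

text \<open>Source module w.r.t. the orientation (with sinks snk) of its quiver.\<close>
definition source_module :: "('v \<Rightarrow> 'v \<Rightarrow> bool) \<Rightarrow> ('v \<Rightarrow> bool) \<Rightarrow> ('v, 'k) rep \<Rightarrow> bool" where
  "source_module adj snk M \<longleftrightarrow>
     (\<forall>p. diam_path adj M p \<longrightarrow> \<not> snk (hd p) \<and> \<not> snk (last p))"

end

theory Submission
  imports Defs "Jordan_Normal_Form.DL_Rank"
begin

text \<open>The shift \<sigma>M agrees with M at the sources, and at a sink y its space is the kernel of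
  \<Oplus>{M_x | x adjacent to y} \<rightarrow> M_y. Hence a sink outside supp M next to supp M enters supp \<sigma>M,
  and a sink of supp M with two neighbours in supp M stays there: otherwise M would split into
  the part on the branch through one neighbour and a complement, contradicting
  indecomposability (which also makes supp M convex). So the inner vertices of every path in
  supp \<sigma>M lie in supp M, and a diameter path a_0 \<dots> a_d of M, running from a sink to a source,
  can only lose a_0 and is prolonged by every sink a_(d+1) beyond a_d; this gives
  d \<le> d(\<sigma>M) \<le> d + 1. Two paths in a convex set of bounded diameter whose lengths add up to
  more than twice the bound must meet, and then they run together along their middle parts.
  Comparing a diameter path of \<sigma>M with a_1 \<dots> a_(d+1) or a_0 \<dots> a_(d+1) therefore locates its
  center, and parity along the bipartite tree shows that when the diameter grows both ends of a
  diameter path of \<sigma>M are new sinks.\<close>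

section \<open>Paths in trees\<close>

lemma is_pathD:
  assumes "is_path adj p"
  shows "p \<noteq> []" "\<And>i. Suc i < length p \<Longrightarrow> adj (p ! i) (p ! Suc i)"
    "\<And>i. i + 2 < length p \<Longrightarrow> p ! i \<noteq> p ! (i + 2)"
  using assms unfolding is_path_def by auto

lemma is_pathI:
  assumes "p \<noteq> []" "\<And>i. Suc i < length p \<Longrightarrow> adj (p ! i) (p ! Suc i)"
    "\<And>i. i + 2 < length p \<Longrightarrow> p ! i \<noteq> p ! (i + 2)"
  shows "is_path adj p"
  using assms unfolding is_path_def by auto

lemma path_single[simp]: "is_path adj [x]"
  unfolding is_path_def by auto

lemma path_two: "adj x y \<Longrightarrow> is_path adj [x, y]"
  unfolding is_path_def by (auto simp: less_Suc_eq)

lemma path_take: assumes "is_path adj p" "0 < k" shows "is_path adj (take k p)"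
  using is_pathD[OF assms(1)] assms(2) by (intro is_pathI) auto

lemma path_drop: assumes "is_path adj p" "k < length p" shows "is_path adj (drop k p)"
proof (intro is_pathI)
  show "drop k p \<noteq> []" using assms by auto
  fix i
  show "Suc i < length (drop k p) \<Longrightarrow> adj (drop k p ! i) (drop k p ! Suc i)"
    using is_pathD(2)[OF assms(1), of "k + i"] assms by auto
  show "i + 2 < length (drop k p) \<Longrightarrow> drop k p ! i \<noteq> drop k p ! (i + 2)"
    using is_pathD(3)[OF assms(1), of "k + i"] assms by (auto simp: add.assoc)
qed

lemma path_rev: assumes "is_path adj p" "\<And>x y. adj x y \<Longrightarrow> adj y x" shows "is_path adj (rev p)"
proof (intro is_pathI)
  show "rev p \<noteq> []" using is_pathD(1)[OF assms(1)] by auto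
  fix i
  assume a: "Suc i < length (rev p)"
  have "adj (p ! (length p - Suc (Suc i))) (p ! Suc (length p - Suc (Suc i)))"
    using is_pathD(2)[OF assms(1), of "length p - Suc (Suc i)"] a by auto
  moreover have "Suc (length p - Suc (Suc i)) = length p - Suc i" using a by auto
  ultimately show "adj (rev p ! i) (rev p ! Suc i)" using a assms(2) by (auto simp: rev_nth)
next
  fix i assume a: "i + 2 < length (rev p)"
  have "p ! (length p - Suc (i+2)) \<noteq> p ! (length p - Suc (i+2) + 2)"
    using is_pathD(3)[OF assms(1), of "length p - Suc (i+2)"] a by auto
  moreover have "length p - Suc (i+2) + 2 = length p - Suc i" using a by auto
  ultimately show "rev p ! i \<noteq> rev p ! (i + 2)" using a by (auto simp: rev_nth)
qed

lemma path_append: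
  assumes p: "is_path adj p" and q: "is_path adj q" and e: "last p = hd q"
    and nb: "2 \<le> length p \<Longrightarrow> 2 \<le> length q \<Longrightarrow> p ! (length p - 2) \<noteq> q ! 1"
  shows "is_path adj (p @ tl q)"
proof (intro is_pathI)
  note P = is_pathD[OF p] and Q = is_pathD[OF q]
  have lp: "last p = p ! (length p - 1)" using P(1) by (simp add: last_conv_nth)
  have hq: "hd q = q ! 0" using Q(1) by (simp add: hd_conv_nth)
  show "p @ tl q \<noteq> []" using P(1) by auto
  fix i
  assume a: "Suc i < length (p @ tl q)"
  show "adj ((p @ tl q) ! i) ((p @ tl q) ! Suc i)"
  proof (cases "Suc i < length p")
    case True then show ?thesis using P(2)[OF True] by (auto simp: nth_append)
  next
    case False
    show ?thesis
    proof (cases "Suc i = length p")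
      case True
      then have "i = length p - 1" by simp
      then have "(p @ tl q) ! i = q ! 0" using lp e hq True by (auto simp: nth_append)
      moreover have "(p @ tl q) ! Suc i = q ! 1" using True a Q(1) by (auto simp: nth_append nth_tl)
      moreover have "1 < length q" using a True by auto
      ultimately show ?thesis using Q(2)[of 0] by auto
    next
      case False2: False
      with False have "length p \<le> i" by auto
      then show ?thesis using Q(2)[of "Suc (i - length p)"] a
        by (auto simp: nth_append nth_tl Suc_diff_le)
    qed
  qed
next
  note P = is_pathD[OF p] and Q = is_pathD[OF q]
  have lp: "last p = p ! (length p - 1)" using P(1) by (simp add: last_conv_nth)
  have hq: "hd q = q ! 0" using Q(1) by (simp add: hd_conv_nth)
  fix i
  assume a: "i + 2 < length (p @ tl q)"
  consider "i + 2 < length p" | "i + 2 = length p" | "i + 1 = length p" | "length p \<le> i" by linarith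
  then show "(p @ tl q) ! i \<noteq> (p @ tl q) ! (i + 2)"
  proof cases
    case 1 then show ?thesis using P(3)[OF 1] by (auto simp: nth_append)
  next
    case 2
    then have "i = length p - 2" by simp
    then have "(p @ tl q) ! i = p ! (length p - 2)" using 2 by (auto simp: nth_append)
    moreover have "(p @ tl q) ! (i + 2) = q ! 1" using 2 a Q(1) by (auto simp: nth_append nth_tl)
    ultimately show ?thesis using nb 2 a by auto
  next
    case 3
    then have "i = length p - 1" by simp
    then have "(p @ tl q) ! i = q ! 0" using lp e hq 3 by (auto simp: nth_append)
    moreover have "(p @ tl q) ! (i + 2) = q ! 2" using 3 a Q(1) by (auto simp: nth_append nth_tl numeral_2_eq_2)
    moreover have "q ! 0 \<noteq> q ! 2" using Q(3)[of 0] 3 a by (simp add: numeral_2_eq_2)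
    ultimately show ?thesis by metis
  next
    case 4
    then have "(p @ tl q) ! i = q ! Suc (i - length p)" using a by (auto simp: nth_append nth_tl)
    moreover have "(p @ tl q) ! (i + 2) = q ! (Suc (i - length p) + 2)" using 4 a by (auto simp: nth_append nth_tl Suc_diff_le)
    ultimately show ?thesis using Q(3)[of "Suc (i - length p)"] 4 a by auto
  qed
qed

lemma path_snoc:
  assumes p: "is_path adj p" and "adj (last p) x" and "2 \<le> length p \<Longrightarrow> p ! (length p - 2) \<noteq> x"
  shows "is_path adj (p @ [x])"
  using path_append[OF p path_two[of adj "last p" x, OF assms(2)]] assms by auto

locale tree =
  fixes adj :: "'v \<Rightarrow> 'v \<Rightarrow> bool"
  assumes adj_sym: "adj x y \<Longrightarrow> adj y x"
    and connected: "\<exists>p. is_path adj p \<and> hd p = x \<and> last p = y"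
    and path_hd_neq_last: "is_path adj p \<Longrightarrow> 2 \<le> length p \<Longrightarrow> hd p \<noteq> last p"

lemma regular_tree_tree: "regular_tree n adj \<Longrightarrow> tree adj"
  unfolding regular_tree_def tree_def by blast

definition branch :: "('v \<Rightarrow> 'v \<Rightarrow> bool) \<Rightarrow> 'v \<Rightarrow> 'v \<Rightarrow> 'v set" where
  "branch adj y x = {a. \<exists>q. is_path adj q \<and> 2 \<le> length q \<and> q ! 0 = y \<and> q ! 1 = x \<and> last q = a}"

context tree begin

lemma adj_irrefl: "\<not> adj x x"
  using path_hd_neq_last[OF path_two[of adj x x]] by auto

lemma path_rev_tree: "is_path adj p \<Longrightarrow> is_path adj (rev p)"
  using path_rev adj_sym by blast

lemma path_slice:
  assumes "is_path adj p" "i \<le> j" "j < length p"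
  shows "is_path adj (drop i (take (Suc j) p))"
  using assms by (intro path_drop path_take) auto

lemma slice_props:
  assumes "i \<le> j" "j < length p"
  shows "length (drop i (take (Suc j) p)) = Suc j - i"
    "\<And>t. t < Suc j - i \<Longrightarrow> drop i (take (Suc j) p) ! t = p ! (i + t)"
    "hd (drop i (take (Suc j) p)) = p ! i" "last (drop i (take (Suc j) p)) = p ! j"
proof -
  show "length (drop i (take (Suc j) p)) = Suc j - i" using assms by auto
  show "\<And>t. t < Suc j - i \<Longrightarrow> drop i (take (Suc j) p) ! t = p ! (i + t)" using assms by auto
  show "hd (drop i (take (Suc j) p)) = p ! i" using assms by (simp add: hd_drop_conv_nth)
  have "drop i (take (Suc j) p) \<noteq> []" using assms by auto
  then show "last (drop i (take (Suc j) p)) = p ! j" using assms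
    by (simp add: last_conv_nth)
qed

lemma path_distinct: assumes "is_path adj p" shows "distinct p"
proof (rule ccontr)
  assume "\<not> distinct p"
  then obtain i j where ij: "i < j" "j < length p" "p ! i = p ! j"
    by (metis distinct_conv_nth linorder_neqE_nat)
  let ?q = "drop i (take (Suc j) p)"
  have "is_path adj ?q" using path_slice[OF assms] ij by auto
  moreover have "2 \<le> length ?q" using slice_props(1)[of i j p] ij by auto
  ultimately have "hd ?q \<noteq> last ?q" by (rule path_hd_neq_last)
  then show False using slice_props(3,4)[of i j p] ij by auto
qed

lemma path_butlast:
  assumes "is_path adj p" "2 \<le> length p"
  shows "is_path adj (butlast p)" "butlast p \<noteq> []" "last (butlast p) = p ! (length p - 2)"
    "hd (butlast p) = hd p" "p = butlast p @ [last p]"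
proof -
  show "is_path adj (butlast p)" using path_take[OF assms(1), of "length p - 1"] assms
    by (simp add: butlast_conv_take)
  show "butlast p \<noteq> []" using assms by (cases p) auto
  then show "last (butlast p) = p ! (length p - 2)" using assms
    by (simp add: last_conv_nth nth_butlast numeral_2_eq_2)
  show "hd (butlast p) = hd p" using assms by (cases p) auto
  show "p = butlast p @ [last p]" using assms by (cases p) auto
qed

lemma path_unique:
  assumes "is_path adj p" "is_path adj q" "hd p = hd q" "last p = last q"
  shows "p = q"
  using assms
proof (induction "length p + length q" arbitrary: p q rule: less_induct)
  case less
  have pne: "p \<noteq> []" and qne: "q \<noteq> []" using less.prems is_pathD by blast+
  show ?case
  proof (cases "length p < 2 \<or> length q < 2")
    case True
    then show ?thesis
    proof
      assume "length p < 2"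
      then have "length p = 1" using pne by (cases p) auto
      then have p1: "p = [hd p]" by (cases p) auto
      then have "hd q = last q" using less.prems by (metis last.simps)
      then have "\<not> 2 \<le> length q" using path_hd_neq_last less.prems(2) by blast
      then have "q = [hd q]" using qne by (cases q) (auto, case_tac list, auto)
      then show ?thesis using p1 less.prems by metis
    next
      assume "length q < 2"
      then have "length q = 1" using qne by (cases q) auto
      then have q1: "q = [hd q]" by (cases q) auto
      then have "hd p = last p" using less.prems by (metis last.simps)
      then have "\<not> 2 \<le> length p" using path_hd_neq_last less.prems(1) by blast
      then have "p = [hd p]" using pne by (cases p) (auto, case_tac list, auto)
      then show ?thesis using q1 less.prems by metis
    qed
  next
    case False
    then have p2: "2 \<le> length p" and q2: "2 \<le> length q" by auto
    note bp = path_butlast[OF less.prems(1) p2] and bq = path_butlast[OF less.prems(2) q2]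
    show ?thesis
    proof (cases "last (butlast p) = last (butlast q)")
      case True
      have lt: "length (butlast p) + length (butlast q) < length p + length q" using p2 by simp
      have hh: "hd (butlast p) = hd (butlast q)" using bp(4) bq(4) less.prems(3) by simp
      have "butlast p = butlast q"
        by (rule less.hyps[OF lt bp(1) bq(1) hh True])
      then show ?thesis using bp(5) bq(5) less.prems(4) by metis
    next
      case False
      have rq: "is_path adj (rev q)" using path_rev_tree less.prems(2) by blast
      have W: "is_path adj (p @ tl (rev q))"
      proof (rule path_append[OF less.prems(1) rq])
        show "last p = hd (rev q)" using less.prems(4) by (simp add: hd_rev)
        show "p ! (length p - 2) \<noteq> rev q ! 1" using False bp(3) bq(3) q2
          by (simp add: rev_nth numeral_2_eq_2)
      qed
      have "tl (rev q) \<noteq> []" using q2 by (cases "rev q") auto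
      then have "last (p @ tl (rev q)) = last (rev q)" by (metis last_appendR last_tl)
      also have "\<dots> = hd q" by (simp add: last_rev)
      finally have "hd (p @ tl (rev q)) = last (p @ tl (rev q))" using less.prems(3) pne by simp
      moreover have "2 \<le> length (p @ tl (rev q))" using p2 by simp
      ultimately show ?thesis using path_hd_neq_last[OF W] by blast
    qed
  qed
qed

lemma root_notin_branch: "y \<notin> branch adj y x"
proof
  assume "y \<in> branch adj y x"
  then obtain q where q: "is_path adj q" "2 \<le> length q" "q ! 0 = y" "last q = y"
    unfolding branch_def by auto
  have "hd q = y" using q hd_conv_nth is_pathD(1)[OF q(1)] by auto
  then show False using path_hd_neq_last[OF q(1,2)] q by auto
qed

lemma nbr_in_branch: "adj y x \<Longrightarrow> x \<in> branch adj y x"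
  unfolding branch_def by (rule CollectI, rule exI[of _ "[y, x]"]) (auto simp: path_two)

lemma path_in_branch:
  assumes "is_path adj q" "1 \<le> i" "i < length q"
  shows "q ! i \<in> branch adj (q ! 0) (q ! 1)"
proof -
  let ?r = "take (Suc i) q"
  have "is_path adj ?r" using path_take assms by auto
  moreover have "last ?r = q ! i" using assms by (simp add: take_Suc_conv_app_nth)
  ultimately show ?thesis unfolding branch_def using assms by (intro CollectI exI[of _ ?r]) auto
qed

lemma branch_step:
  assumes a: "a \<in> branch adj y x" and ab: "adj a b" and bny: "b \<noteq> y"
  shows "b \<in> branch adj y x"
proof -
  obtain q where q: "is_path adj q" "2 \<le> length q" "q ! 0 = y" "q ! 1 = x" "last q = a"
    using a unfolding branch_def by auto
  show ?thesis
  proof (cases "q ! (length q - 2) = b")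
    case True
    have "length q \<noteq> 2" using True q bny by auto
    then have l3: "3 \<le> length q" using q by auto
    note bq = path_butlast[OF q(1,2)]
    have "2 \<le> length (butlast q)" using l3 by simp
    moreover have "butlast q ! 0 = y" "butlast q ! 1 = x" using q l3 by (auto simp: nth_butlast)
    ultimately show ?thesis unfolding branch_def using bq True by auto
  next
    case False
    have "is_path adj (q @ [b])" using path_snoc[OF q(1)] q ab False by auto
    moreover have "(q @ [b]) ! 0 = y" "(q @ [b]) ! 1 = x" using q by (auto simp: nth_append)
    ultimately show ?thesis unfolding branch_def using q by (intro CollectI exI[of _ "q @ [b]"]) auto
  qed
qed

lemma path_nth_neq_hd:
  assumes "is_path adj q" "1 \<le> i" "i < length q" shows "q ! i \<noteq> q ! 0"
proof -
  let ?r = "take (Suc i) q"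
  have "is_path adj ?r" using path_take assms by auto
  moreover have "2 \<le> length ?r" using assms by auto
  ultimately have "hd ?r \<noteq> last ?r" by (rule path_hd_neq_last)
  moreover have "last ?r = q ! i" using assms by (simp add: take_Suc_conv_app_nth)
  moreover have "hd ?r = q ! 0" using assms is_pathD(1)[OF assms(1)] by (simp add: hd_conv_nth)
  ultimately show ?thesis by simp
qed

lemma path_stays_out_of_branch:
  assumes x1: "adj y x1" and q: "is_path adj q" "2 \<le> length q" "q ! 0 = y" and ne: "q ! 1 \<noteq> x1"
  shows "1 \<le> i \<Longrightarrow> i < length q \<Longrightarrow> q ! i \<notin> branch adj y x1"
proof (induction i rule: nat_induct_at_least)
  case base
  show ?case
  proof
    assume "q ! 1 \<in> branch adj y x1"
    then obtain r where r: "is_path adj r" "2 \<le> length r" "r ! 0 = y" "r ! 1 = x1" "last r = q ! 1"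
      unfolding branch_def by auto
    have ry: "r ! (length r - 2) \<noteq> y"
    proof
      assume e: "r ! (length r - 2) = y"
      show False
      proof (cases "length r = 2")
        case True
        have "last r = r ! 1" using True r is_pathD(1)[OF r(1)] by (simp add: last_conv_nth)
        then show False using r ne by auto
      next
        case False
        then have "1 \<le> length r - 2" "length r - 2 < length r" using r by auto
        from path_nth_neq_hd[OF r(1) this] show False using e r by auto
      qed
    qed
    have "adj (q ! 0) (q ! 1)" using is_pathD(2)[OF q(1), of 0] q by auto
    then have "adj (last r) y" using r q adj_sym by auto
    then have "is_path adj (r @ [y])" using path_snoc[OF r(1)] ry by auto
    moreover have "2 \<le> length (r @ [y])" using r(2) by simp
    ultimately have "hd (r @ [y]) \<noteq> last (r @ [y])" by (rule path_hd_neq_last)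
    moreover have "hd (r @ [y]) = y" using r is_pathD(1)[OF r(1)] hd_conv_nth by auto
    ultimately show False by simp
  qed
next
  case (Suc i)
  have i1: "1 \<le> i" and il: "i < length q" and sl: "Suc i < length q" using Suc.hyps Suc.prems by auto
  have ih: "q ! i \<notin> branch adj y x1" using Suc.IH il by blast
  show ?case
  proof
    assume a: "q ! Suc i \<in> branch adj y x1"
    have "adj (q ! i) (q ! Suc i)" using is_pathD(2)[OF q(1) sl] .
    then have e: "adj (q ! Suc i) (q ! i)" by (rule adj_sym)
    have "q ! i \<noteq> q ! 0" using path_nth_neq_hd[OF q(1) i1 il] .
    then have "q ! i \<noteq> y" using q(3) by simp
    from branch_step[OF a e this] ih show False by blast
  qed
qed

lemma branches_disjoint:
  assumes "adj y x1" "adj y x2" "x1 \<noteq> x2"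
  shows "branch adj y x1 \<inter> branch adj y x2 = {}"
proof -
  { fix a assume a1: "a \<in> branch adj y x1" and a2: "a \<in> branch adj y x2"
    obtain q where q: "is_path adj q" "2 \<le> length q" "q ! 0 = y" "q ! 1 = x2" "last q = a"
      using a2 unfolding branch_def by auto
    have "q ! (length q - 1) \<notin> branch adj y x1"
      using path_stays_out_of_branch[OF assms(1) q(1,2,3), of "length q - 1"] q assms by auto
    then have False using a1 q is_pathD(1)[OF q(1)] by (simp add: last_conv_nth)
  }
  then show ?thesis by blast
qed

end

lemma path_parity:
  assumes bip: "bipartite_orientation adj snk" and p: "is_path adj p"
  shows "i < length p \<Longrightarrow> (snk (p ! i) = snk (p ! 0)) = even i"
proof (induction i)
  case 0 then show ?case by simp
next
  case (Suc i)
  have "adj (p ! i) (p ! Suc i)" using is_pathD(2)[OF p Suc.prems] .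
  then have "snk (p ! i) \<longleftrightarrow> \<not> snk (p ! Suc i)" using bip unfolding bipartite_orientation_def by blast
  then show ?case using Suc by auto
qed

section \<open>Convex sets of bounded diameter\<close>

definition convex :: "('v \<Rightarrow> 'v \<Rightarrow> bool) \<Rightarrow> 'v set \<Rightarrow> bool" where
  "convex adj S \<longleftrightarrow> (\<forall>q. is_path adj q \<and> hd q \<in> S \<and> last q \<in> S \<longrightarrow> set q \<subseteq> S)"

definition diam_bound :: "('v \<Rightarrow> 'v \<Rightarrow> bool) \<Rightarrow> 'v set \<Rightarrow> nat \<Rightarrow> bool" where
  "diam_bound adj S D \<longleftrightarrow> (\<forall>q. is_path adj q \<and> set q \<subseteq> S \<longrightarrow> length q \<le> Suc D)"

lemma path_append3:
  assumes A: "is_path adj A" and R: "is_path adj R" and B: "is_path adj B"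
    and e1: "last A = hd R" and e2: "last R = hd B" and lR: "2 \<le> length R"
    and c1: "2 \<le> length A \<Longrightarrow> A ! (length A - 2) \<noteq> R ! 1"
    and c2: "2 \<le> length B \<Longrightarrow> R ! (length R - 2) \<noteq> B ! 1"
  shows "is_path adj (A @ tl (R @ tl B))" "length (A @ tl (R @ tl B)) = length A + length R + length B - 2"
    "set (A @ tl (R @ tl B)) \<subseteq> set A \<union> set R \<union> set B"
proof -
  have RB: "is_path adj (R @ tl B)" using path_append[OF R B e2] c2 lR by auto
  have Rne: "R \<noteq> []" using lR by auto
  show "is_path adj (A @ tl (R @ tl B))"
  proof (rule path_append[OF A RB])
    show "last A = hd (R @ tl B)" using e1 Rne by simp
    show "A ! (length A - 2) \<noteq> (R @ tl B) ! 1" if "2 \<le> length A" using c1[OF that] lR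
      by (simp add: nth_append)
  qed
  show "length (A @ tl (R @ tl B)) = length A + length R + length B - 2"
    using lR is_pathD(1)[OF B] by (cases B) auto
  have st: "set (tl xs) \<subseteq> set xs" for xs :: "'a list" by (cases xs) auto
  have "set (A @ tl (R @ tl B)) \<subseteq> set A \<union> set (R @ tl B)" using st[of "R @ tl B"] by auto
  also have "\<dots> \<subseteq> set A \<union> set R \<union> set B" using st[of B] by auto
  finally show "set (A @ tl (R @ tl B)) \<subseteq> set A \<union> set R \<union> set B" .
qed

lemma path_center_rev: "path_center (rev q) = path_center q"
proof -
  let ?t = "length q - 1"
  let ?r = "?t div 2"
  show ?thesis
  proof (cases "q = []")
    case True then show ?thesis by simp
  next
    case False
    then have lq: "length q = Suc ?t" by simp
    show ?thesis
    proof (cases "even ?t")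
      case True
      have e: "length q - Suc ?r = ?r" using lq True by presburger
      have "?r < length q" using lq by simp
      then have "rev q ! ?r = q ! ?r" using e by (simp add: rev_nth)
      then show ?thesis unfolding path_center_def Let_def using True by simp
    next
      case False
      then have t: "?t = 2 * ?r + 1" by presburger
      have e1: "length q - Suc ?r = ?r + 1" using lq t by linarith
      have e2: "length q - Suc (?r + 1) = ?r" using lq t by linarith
      have "rev q ! ?r = q ! (?r + 1)" using lq t e1 by (simp add: rev_nth)
      moreover have "rev q ! (?r + 1) = q ! ?r" using lq t e2 rev_nth[of "?r + 1" q] by simp
      ultimately show ?thesis unfolding path_center_def Let_def using False by auto
    qed
  qed
qed

context tree begin

lemma bridge_between_disjoint_paths:
  assumes P: "is_path adj P" and Q: "is_path adj Q" and disj: "set P \<inter> set Q = {}"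
  obtains R where "is_path adj R" "2 \<le> length R" "hd R \<in> set P" "last R \<in> set Q"
    "R ! 1 \<notin> set P" "R ! (length R - 2) \<notin> set Q"
proof -
  have Pne: "P \<noteq> []" and Qne: "Q \<noteq> []" using P Q is_pathD by blast+
  obtain R0 where R0: "is_path adj R0" "hd R0 = hd P" "last R0 = hd Q" using connected by blast
  have R0ne: "R0 \<noteq> []" using is_pathD(1)[OF R0(1)] .
  \<comment> \<open>cut R0 between its last visit to P and the next visit to Q\<close>
  define I where "I = {i. i < length R0 \<and> R0 ! i \<in> set P}"
  have "R0 ! 0 = hd P" using R0ne R0(2) hd_conv_nth by metis
  then have "0 \<in> I" unfolding I_def using R0ne Pne by (auto simp: hd_in_set)
  moreover have fI: "finite I" unfolding I_def by auto
  define i0 where "i0 = Max I"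
  have i0I: "i0 \<in> I" unfolding i0_def using fI \<open>0 \<in> I\<close> Max_in by blast
  have i0max: "\<And>i. i \<in> I \<Longrightarrow> i \<le> i0" unfolding i0_def using fI by auto
  define J where "J = {j. i0 < j \<and> j < length R0 \<and> R0 ! j \<in> set Q}"
  have lastQ: "R0 ! (length R0 - 1) \<in> set Q" using R0(3) R0ne Qne by (simp add: last_conv_nth hd_in_set)
  have "i0 \<noteq> length R0 - 1" using i0I lastQ disj unfolding I_def by auto
  then have "length R0 - 1 \<in> J" unfolding J_def using i0I lastQ R0ne unfolding I_def by auto
  then have Jne: "J \<noteq> {}" by auto
  define j0 where "j0 = Min J"
  have fJ: "finite J" unfolding J_def by auto
  have j0J: "j0 \<in> J" unfolding j0_def using fJ Jne Min_in by blast
  have j0min: "\<And>j. j \<in> J \<Longrightarrow> j0 \<le> j" unfolding j0_def using fJ by auto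
  have ij: "i0 < j0" "j0 < length R0" using j0J unfolding J_def by auto
  define R where "R = drop i0 (take (Suc j0) R0)"
  have Rp: "is_path adj R" unfolding R_def using path_slice[OF R0(1)] ij by auto
  note Rf = slice_props[of i0 j0 R0, folded R_def]
  have lR: "length R = Suc j0 - i0" using Rf ij by auto
  have u: "hd R \<in> set P" using Rf(3) ij i0I unfolding I_def by auto
  have v: "last R \<in> set Q" using Rf(4) ij j0J unfolding J_def by auto
  have Rin: "R ! t \<notin> set P \<and> R ! t \<notin> set Q" if t: "0 < t" "t < length R - 1" for t
  proof -
    have Rt: "R ! t = R0 ! (i0 + t)" using Rf(2)[of t] t lR ij by auto
    have "i0 + t \<notin> I" using i0max[of "i0 + t"] t by auto
    then have "R0 ! (i0 + t) \<notin> set P" unfolding I_def using t lR ij by auto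
    moreover have "i0 + t \<notin> J" using j0min[of "i0 + t"] t lR ij by auto
    then have "R0 ! (i0 + t) \<notin> set Q" unfolding J_def using t lR ij by auto
    ultimately show ?thesis using Rt by simp
  qed
  have "R ! 1 \<notin> set P"
  proof (cases "length R = 2")
    case True
    then have "R ! 1 = last R" using Rp is_pathD(1)[OF Rp] by (simp add: last_conv_nth)
    then show ?thesis using v disj by auto
  next
    case False then show ?thesis using Rin[of 1] lR ij by auto
  qed
  moreover have "R ! (length R - 2) \<notin> set Q"
  proof (cases "length R = 2")
    case True
    then have "R ! (length R - 2) = hd R" using hd_conv_nth[OF is_pathD(1)[OF Rp]] by simp
    then show ?thesis using u disj by auto
  next
    case False then show ?thesis using Rin[of "length R - 2"] lR ij by auto
  qed
  moreover have "2 \<le> length R" using lR ij by auto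
  ultimately show ?thesis using that Rp u v by blast
qed

lemma longer_part_ending_at:
  assumes P: "is_path adj P" and s: "s < length P"
  obtains A where "is_path adj A" "last A = P ! s" "set A \<subseteq> set P" "length P \<le> 2 * length A - 1"
    "2 \<le> length A \<Longrightarrow> A ! (length A - 2) \<in> set P"
proof (cases "length P \<le> 2 * s + 1")
  case True
  let ?A = "take (Suc s) P"
  show ?thesis
  proof (rule that[of ?A])
    show "is_path adj ?A" using path_take P by auto
    show "last ?A = P ! s" using s by (simp add: take_Suc_conv_app_nth)
    show "set ?A \<subseteq> set P" by (rule set_take_subset)
    show "length P \<le> 2 * length ?A - 1" using True s by auto
    show "?A ! (length ?A - 2) \<in> set P" if "2 \<le> length ?A" using that s by auto
  qed
next
  case False
  let ?A = "rev (drop s P)"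
  show ?thesis
  proof (rule that[of ?A])
    show "is_path adj ?A" using path_drop P s path_rev_tree by auto
    show "last ?A = P ! s" using s by (simp add: last_rev hd_drop_conv_nth)
    show "set ?A \<subseteq> set P" by (auto dest: in_set_dropD)
    show "length P \<le> 2 * length ?A - 1" using False s by auto
    show "?A ! (length ?A - 2) \<in> set P" if "2 \<le> length ?A"
      using that s by (auto simp: rev_nth dest: in_set_dropD)
  qed
qed

lemma long_paths_intersect:
  assumes S_convex: "convex adj S" and S_diam_bound: "diam_bound adj S D"
    and P: "is_path adj P" "set P \<subseteq> S" and Q: "is_path adj Q" "set Q \<subseteq> S"
    and len: "2 * D < length P + length Q"
  shows "set P \<inter> set Q \<noteq> {}"
proof
  assume disj: "set P \<inter> set Q = {}"
  \<comment> \<open>otherwise the bridge from P to Q, extended by the longer parts of P and Q, is too long\<close>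
  obtain R where R: "is_path adj R" "2 \<le> length R" "hd R \<in> set P" "last R \<in> set Q"
    "R ! 1 \<notin> set P" "R ! (length R - 2) \<notin> set Q"
    using bridge_between_disjoint_paths[OF P(1) Q(1) disj] .
  have RS: "set R \<subseteq> S"
    using S_convex unfolding convex_def using R P(2) Q(2) by blast
  obtain s where s: "s < length P" "P ! s = hd R" using R(3) by (metis in_set_conv_nth)
  obtain t where t: "t < length Q" "Q ! t = last R" using R(4) by (metis in_set_conv_nth)
  obtain A where A: "is_path adj A" "last A = hd R" "set A \<subseteq> set P" "length P \<le> 2 * length A - 1"
    "2 \<le> length A \<Longrightarrow> A ! (length A - 2) \<in> set P"
    using longer_part_ending_at[OF P(1) s(1)] s(2) by metis
  obtain B' where B': "is_path adj B'" "last B' = last R" "set B' \<subseteq> set Q" "length Q \<le> 2 * length B' - 1"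
    "2 \<le> length B' \<Longrightarrow> B' ! (length B' - 2) \<in> set Q"
    using longer_part_ending_at[OF Q(1) t(1)] t(2) by metis
  define B where "B = rev B'"
  have B: "is_path adj B" "hd B = last R" "set B \<subseteq> set Q" "length Q \<le> 2 * length B - 1"
    "2 \<le> length B \<Longrightarrow> B ! 1 \<in> set Q"
    using B' path_rev_tree unfolding B_def by (auto simp: hd_rev rev_nth numeral_2_eq_2)
  have c1: "2 \<le> length A \<Longrightarrow> A ! (length A - 2) \<noteq> R ! 1" using A(5) R(5) by auto
  have c2: "2 \<le> length B \<Longrightarrow> R ! (length R - 2) \<noteq> B ! 1" using B(5) R(6) by auto
  note W = path_append3[OF A(1) R(1) B(1) A(2) B(2)[symmetric] R(2) c1 c2]
  have "set (A @ tl (R @ tl B)) \<subseteq> S" using W(3) A(3) B(3) P(2) Q(2) RS by blast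
  then have "length (A @ tl (R @ tl B)) \<le> Suc D" using S_diam_bound W(1) unfolding diam_bound_def by blast
  moreover have "A \<noteq> []" "B \<noteq> []" using is_pathD(1) A(1) B(1) by blast+
  ultimately show False using W(2) A(4) B(4) len R(2) by (cases A; cases B) auto
qed


lemma append_length_bound:
  assumes S_diam_bound: "diam_bound adj S D" and A: "is_path adj A" "set A \<subseteq> S" and B: "is_path adj B" "set B \<subseteq> S"
    and e: "last A = hd B" and c: "2 \<le> length A \<Longrightarrow> 2 \<le> length B \<Longrightarrow> A ! (length A - 2) \<noteq> B ! 1"
  shows "length A + length B \<le> D + 2"
proof -
  have W: "is_path adj (A @ tl B)" using path_append[OF A(1) B(1) e c] by blast
  have st: "set (tl B) \<subseteq> set B" by (cases B) auto
  have "set (A @ tl B) \<subseteq> S" using A(2) B(2) st by auto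
  then have "length (A @ tl B) \<le> Suc D" using S_diam_bound W unfolding diam_bound_def by blast
  then show ?thesis using is_pathD(1)[OF B(1)] by (cases B) auto
qed

lemma take_arm:
  assumes "is_path adj P" "i < length P"
  shows "is_path adj (take (Suc i) P)" "last (take (Suc i) P) = P ! i" "length (take (Suc i) P) = Suc i"
    "2 \<le> length (take (Suc i) P) \<Longrightarrow> take (Suc i) P ! (length (take (Suc i) P) - 2) = P ! (i - 1)"
    "set (take (Suc i) P) \<subseteq> set P"
proof -
  show "is_path adj (take (Suc i) P)" using path_take[OF assms(1)] by simp
  show "last (take (Suc i) P) = P ! i" using assms(2) by (simp add: take_Suc_conv_app_nth)
  show "length (take (Suc i) P) = Suc i" using assms(2) by simp
  show "take (Suc i) P ! (length (take (Suc i) P) - 2) = P ! (i - 1)" if "2 \<le> length (take (Suc i) P)"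
    using that assms(2) by simp
  show "set (take (Suc i) P) \<subseteq> set P" by (rule set_take_subset)
qed

lemma drop_arm:
  assumes "is_path adj Q" "j < length Q"
  shows "is_path adj (drop j Q)" "hd (drop j Q) = Q ! j" "length (drop j Q) = length Q - j"
    "2 \<le> length (drop j Q) \<Longrightarrow> drop j Q ! 1 = Q ! (j + 1)"
    "set (drop j Q) \<subseteq> set Q"
proof -
  show "is_path adj (drop j Q)" using path_drop[OF assms] .
  show "hd (drop j Q) = Q ! j" using assms(2) by (simp add: hd_drop_conv_nth)
  show "length (drop j Q) = length Q - j" by simp
  show "drop j Q ! 1 = Q ! (j + 1)" if "2 \<le> length (drop j Q)" using that by simp
  show "set (drop j Q) \<subseteq> set Q" by (rule set_drop_subset)
qed

lemma rev_take_arm: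
  assumes "is_path adj Q" "j < length Q"
  shows "is_path adj (rev (take (Suc j) Q))" "hd (rev (take (Suc j) Q)) = Q ! j"
    "length (rev (take (Suc j) Q)) = Suc j"
    "2 \<le> length (rev (take (Suc j) Q)) \<Longrightarrow> rev (take (Suc j) Q) ! 1 = Q ! (j - 1)"
    "set (rev (take (Suc j) Q)) \<subseteq> set Q"
proof -
  note T = take_arm[OF assms]
  show "is_path adj (rev (take (Suc j) Q))" using path_rev_tree[OF T(1)] .
  show "hd (rev (take (Suc j) Q)) = Q ! j" using T(2) by (simp add: hd_rev)
  show "length (rev (take (Suc j) Q)) = Suc j" using T(3) by simp
  show "rev (take (Suc j) Q) ! 1 = Q ! (j - 1)" if "2 \<le> length (rev (take (Suc j) Q))"
  proof -
    have "rev (take (Suc j) Q) ! 1 = take (Suc j) Q ! (Suc j - 2)" using that T(3) by (simp add: rev_nth)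
    also have "\<dots> = Q ! (j - 1)" using that T(3) by simp
    finally show ?thesis .
  qed
  show "set (rev (take (Suc j) Q)) \<subseteq> set Q" using T(5) by simp
qed

lemma rev_drop_arm:
  assumes "is_path adj P" "k < length P"
  shows "is_path adj (rev (drop k P))" "last (rev (drop k P)) = P ! k"
    "length (rev (drop k P)) = length P - k"
    "2 \<le> length (rev (drop k P)) \<Longrightarrow> rev (drop k P) ! (length (rev (drop k P)) - 2) = P ! (k + 1)"
    "set (rev (drop k P)) \<subseteq> set P"
proof -
  note T = drop_arm[OF assms]
  show "is_path adj (rev (drop k P))" using path_rev_tree[OF T(1)] .
  show "last (rev (drop k P)) = P ! k" using T(2) by (simp add: last_rev)
  show "length (rev (drop k P)) = length P - k" by simp
  show "rev (drop k P) ! (length (rev (drop k P)) - 2) = P ! (k + 1)" if "2 \<le> length (rev (drop k P))"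
  proof -
    have "rev (drop k P) ! (length (rev (drop k P)) - 2) = drop k P ! 1" using that by (simp add: rev_nth)
    also have "\<dots> = P ! (k + 1)" using that T(4) by simp
    finally show ?thesis .
  qed
  show "set (rev (drop k P)) \<subseteq> set P" using T(5) by simp
qed

lemma alignment_indices:
  assumes S_diam_bound: "diam_bound adj S D" and P: "is_path adj P" "set P \<subseteq> S" and Q: "is_path adj Q" "set Q \<subseteq> S"
    and lQ: "length Q = Suc D"
    and i: "i < length P" "\<And>i'. i' < i \<Longrightarrow> P ! i' \<notin> set Q"
    and k: "k < length P" "\<And>k'. k < k' \<Longrightarrow> k' < length P \<Longrightarrow> P ! k' \<notin> set Q"
    and ik: "i \<le> k"
    and j: "j < length Q" "Q ! j = P ! i" and l: "l < length Q" "Q ! l = P ! k" and jl: "j \<le> l"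
  shows "i \<le> j" "i + j \<le> D" "length P \<le> Suc (k + l)" "l + length P \<le> Suc (D + k)"
    "k - i = l - j" "\<And>t. t \<le> k - i \<Longrightarrow> P ! (i + t) = Q ! (j + t)"
proof -
  note A1 = take_arm[OF P(1) i(1)] and A2 = rev_drop_arm[OF P(1) k(1)]
  note B1 = drop_arm[OF Q(1) j(1)] and B2 = rev_take_arm[OF Q(1) j(1)]
  note B3 = drop_arm[OF Q(1) l(1)] and B4 = rev_take_arm[OF Q(1) l(1)]
  have A1S: "set (take (Suc i) P) \<subseteq> S" using A1(5) P(2) by blast
  have A2S: "set (rev (drop k P)) \<subseteq> S" using A2(5) P(2) by blast
  have B1S: "set (drop j Q) \<subseteq> S" using B1(5) Q(2) by blast
  have B2S: "set (rev (take (Suc j) Q)) \<subseteq> S" using B2(5) Q(2) by blast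
  have B3S: "set (drop l Q) \<subseteq> S" using B3(5) Q(2) by blast
  have B4S: "set (rev (take (Suc l) Q)) \<subseteq> S" using B4(5) Q(2) by blast
  have qin: "\<And>a. a < length Q \<Longrightarrow> Q ! a \<in> set Q" by simp
  have c1: "P ! (i - 1) \<notin> set Q" if "2 \<le> length (take (Suc i) P)"
    using i(2)[of "i - 1"] that A1(3) by auto
  have c2: "P ! (k + 1) \<notin> set Q" if "2 \<le> length (rev (drop k P))"
    using k(2)[of "k + 1"] that A2(3) by auto
  have "length (take (Suc i) P) + length (drop j Q) \<le> D + 2"
  proof (rule append_length_bound[OF S_diam_bound A1(1) A1S B1(1) B1S])
    show "last (take (Suc i) P) = hd (drop j Q)" using A1(2) B1(2) j by simp
    show "take (Suc i) P ! (length (take (Suc i) P) - 2) \<noteq> drop j Q ! 1"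
      if "2 \<le> length (take (Suc i) P)" "2 \<le> length (drop j Q)"
      using A1(4)[OF that(1)] B1(4)[OF that(2)] c1[OF that(1)] qin[of "j+1"] that(2) B1(3) by auto
  qed
  then show "i \<le> j" using A1(3) B1(3) j lQ by linarith
  have "length (take (Suc i) P) + length (rev (take (Suc j) Q)) \<le> D + 2"
  proof (rule append_length_bound[OF S_diam_bound A1(1) A1S B2(1) B2S])
    show "last (take (Suc i) P) = hd (rev (take (Suc j) Q))" using A1(2) B2(2) j by simp
    show "take (Suc i) P ! (length (take (Suc i) P) - 2) \<noteq> rev (take (Suc j) Q) ! 1"
      if "2 \<le> length (take (Suc i) P)" "2 \<le> length (rev (take (Suc j) Q))"
      using A1(4)[OF that(1)] B2(4)[OF that(2)] c1[OF that(1)] qin[of "j - 1"] j(1) by auto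
  qed
  then show "i + j \<le> D" using A1(3) B2(3) by linarith
  have "length (rev (drop k P)) + length (drop l Q) \<le> D + 2"
  proof (rule append_length_bound[OF S_diam_bound A2(1) A2S B3(1) B3S])
    show "last (rev (drop k P)) = hd (drop l Q)" using A2(2) B3(2) l by simp
    show "rev (drop k P) ! (length (rev (drop k P)) - 2) \<noteq> drop l Q ! 1"
      if "2 \<le> length (rev (drop k P))" "2 \<le> length (drop l Q)"
      using A2(4)[OF that(1)] B3(4)[OF that(2)] c2[OF that(1)] qin[of "l+1"] that(2) B3(3) by auto
  qed
  then show "length P \<le> Suc (k + l)" using A2(3) B3(3) l lQ k by linarith
  have "length (rev (drop k P)) + length (rev (take (Suc l) Q)) \<le> D + 2"
  proof (rule append_length_bound[OF S_diam_bound A2(1) A2S B4(1) B4S])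
    show "last (rev (drop k P)) = hd (rev (take (Suc l) Q))" using A2(2) B4(2) l by simp
    show "rev (drop k P) ! (length (rev (drop k P)) - 2) \<noteq> rev (take (Suc l) Q) ! 1"
      if "2 \<le> length (rev (drop k P))" "2 \<le> length (rev (take (Suc l) Q))"
      using A2(4)[OF that(1)] B4(4)[OF that(2)] c2[OF that(1)] qin[of "l - 1"] l(1) by auto
  qed
  then show "l + length P \<le> Suc (D + k)" using A2(3) B4(3) k by linarith
  let ?SP = "drop i (take (Suc k) P)" and ?SQ = "drop j (take (Suc l) Q)"
  have "?SP = ?SQ"
  proof (rule path_unique)
    show "is_path adj ?SP" using path_slice[OF P(1) ik k(1)] .
    show "is_path adj ?SQ" using path_slice[OF Q(1) jl l(1)] .
    show "hd ?SP = hd ?SQ" using slice_props(3)[OF ik k(1)] slice_props(3)[OF jl l(1)] j by simp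
    show "last ?SP = last ?SQ" using slice_props(4)[OF ik k(1)] slice_props(4)[OF jl l(1)] l by simp
  qed
  then have "length ?SP = length ?SQ" by simp
  then show ks: "k - i = l - j" using slice_props(1)[OF ik k(1)] slice_props(1)[OF jl l(1)] ik jl by linarith
  show "P ! (i + t) = Q ! (j + t)" if "t \<le> k - i" for t
  proof -
    have tl1: "t < Suc k - i" using that ik by linarith
    have "P ! (i + t) = ?SP ! t" using slice_props(2)[OF ik k(1) tl1] by simp
    also have "\<dots> = ?SQ ! t" using \<open>?SP = ?SQ\<close> by simp
    also have "\<dots> = Q ! (j + t)" using slice_props(2)[OF jl l(1), of t] tl1 ks jl ik by simp
    finally show ?thesis .
  qed
qed

text \<open>Q' is the diameter path Q oriented like P; on the common segment from P ! i to P ! k the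
  path P is Q' shifted by d, and the bounds force this segment to cover the middle of Q'.\<close>

lemma diameter_path_alignment:
  assumes S_diam_bound: "diam_bound adj S D" and P: "is_path adj P" "set P \<subseteq> S" and Q: "is_path adj Q" "set Q \<subseteq> S"
    and lQ: "length Q = Suc D" and int: "set P \<inter> set Q \<noteq> {}"
  shows "\<exists>Q'. (Q' = Q \<or> Q' = rev Q) \<and> (\<exists>i k d. i \<le> k \<and> k < length P \<and> d + length P \<le> Suc D \<and>
     2 * i + d \<le> D \<and> length P \<le> Suc (2 * k + d) \<and> (\<forall>t. i \<le> t \<and> t \<le> k \<longrightarrow> Q' ! (t + d) = P ! t))"
proof -
  define I where "I = {i. i < length P \<and> P ! i \<in> set Q}"
  have fI: "finite I" unfolding I_def by auto
  have Ine: "I \<noteq> {}" using int unfolding I_def by (auto simp: in_set_conv_nth)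
  define i where "i = Min I"
  define k where "k = Max I"
  have iI: "i \<in> I" and kI: "k \<in> I" unfolding i_def k_def using fI Ine by auto
  have ik: "i \<le> k" unfolding i_def k_def using fI Ine by auto
  have imin: "\<And>i'. i' < i \<Longrightarrow> P ! i' \<notin> set Q"
  proof
    fix i' assume "i' < i" "P ! i' \<in> set Q"
    then have "i' \<in> I" using iI unfolding I_def by auto
    then show False using \<open>i' < i\<close> fI unfolding i_def by (meson Min_le leD)
  qed
  have kmax: "\<And>k'. k < k' \<Longrightarrow> k' < length P \<Longrightarrow> P ! k' \<notin> set Q"
  proof
    fix k' assume "k < k'" "k' < length P" "P ! k' \<in> set Q"
    then have "k' \<in> I" unfolding I_def by auto
    then show False using \<open>k < k'\<close> fI unfolding k_def by (meson Max_ge leD)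
  qed
  have il: "i < length P" and kl: "k < length P" using iI kI unfolding I_def by auto
  obtain j where j: "j < length Q" "Q ! j = P ! i" using iI unfolding I_def by (metis (mono_tags) in_set_conv_nth mem_Collect_eq)
  obtain l where l: "l < length Q" "Q ! l = P ! k" using kI unfolding I_def by (metis (mono_tags) in_set_conv_nth mem_Collect_eq)
  have main: "\<exists>i k d. i \<le> k \<and> k < length P \<and> d + length P \<le> Suc D \<and>
     2 * i + d \<le> D \<and> length P \<le> Suc (2 * k + d) \<and> (\<forall>t. i \<le> t \<and> t \<le> k \<longrightarrow> Q' ! (t + d) = P ! t)"
    if Q': "is_path adj Q'" "set Q' = set Q" "length Q' = Suc D" and j': "j' < length Q'" "Q' ! j' = P ! i"
      and l': "l' < length Q'" "Q' ! l' = P ! k" and jl: "j' \<le> l'" for Q' j' l'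
  proof -
    have Q'S: "set Q' \<subseteq> S" using Q' Q(2) by simp
    have imin': "\<And>i'. i' < i \<Longrightarrow> P ! i' \<notin> set Q'" using imin Q'(2) by simp
    have kmax': "\<And>k'. k < k' \<Longrightarrow> k' < length P \<Longrightarrow> P ! k' \<notin> set Q'" using kmax Q'(2) by simp
    note A = alignment_indices[OF S_diam_bound P Q'(1) Q'S Q'(3) il imin' kl kmax' ik j' l' jl]
    show ?thesis
    proof (intro exI conjI allI impI)
      show "i \<le> k" "k < length P" by (fact ik) (fact kl)
      show "j' - i + length P \<le> Suc D" using A(1,4,5) ik jl by linarith
      show "2 * i + (j' - i) \<le> D" using A(1,2) by linarith
      show "length P \<le> Suc (2 * k + (j' - i))" using A(1,3,5) ik jl by linarith
      fix t assume t: "i \<le> t \<and> t \<le> k"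
      have "P ! (i + (t - i)) = Q' ! (j' + (t - i))" using A(6)[of "t - i"] t by auto
      moreover have "j' + (t - i) = t + (j' - i)" using t A(1) by linarith
      ultimately show "Q' ! (t + (j' - i)) = P ! t" using t by simp
    qed
  qed
  show ?thesis
  proof (cases "j \<le> l")
    case True
    show ?thesis by (rule exI[of _ Q], rule conjI, simp, rule main[OF Q(1) refl lQ j l True])
  next
    case False
    have rQ: "is_path adj (rev Q)" "set (rev Q) = set Q" "length (rev Q) = Suc D" using path_rev_tree Q lQ by auto
    have j': "D - j < length (rev Q)" "rev Q ! (D - j) = P ! i" using j lQ by (auto simp: rev_nth Suc_diff_le)
    have l': "D - l < length (rev Q)" "rev Q ! (D - l) = P ! k" using l lQ by (auto simp: rev_nth Suc_diff_le)
    have "D - j \<le> D - l" using False by simp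
    show ?thesis by (rule exI[of _ "rev Q"], rule conjI, simp, rule main[OF rQ j' l' \<open>D - j \<le> D - l\<close>])
  qed
qed

end

lemma diam_ge:
  assumes b: "diam_bound adj (supp N) B" and q: "is_path adj q" "set q \<subseteq> supp N"
  shows "length q - 1 \<le> diam adj N"
proof -
  let ?L = "{length q - 1 | q. is_path adj q \<and> set q \<subseteq> supp N}"
  have "?L \<subseteq> {..B}" using b unfolding diam_bound_def by force
  then have "finite ?L" using finite_subset by blast
  moreover have "length q - 1 \<in> ?L" using q by blast
  ultimately show ?thesis unfolding diam_def by (rule Max_ge)
qed

lemma diam_path_exists:
  assumes b: "diam_bound adj (supp N) B" and q: "is_path adj q" "set q \<subseteq> supp N"
  shows "\<exists>q. diam_path adj N q"
proof -
  let ?L = "{length q - 1 | q. is_path adj q \<and> set q \<subseteq> supp N}"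
  have "?L \<subseteq> {..B}" using b unfolding diam_bound_def by force
  then have "finite ?L" using finite_subset by blast
  moreover have "?L \<noteq> {}" using q by blast
  ultimately have "diam adj N \<in> ?L" unfolding diam_def by (rule Max_in)
  then obtain q' where "diam adj N = length q' - 1" "is_path adj q'" "set q' \<subseteq> supp N" by blast
  then show ?thesis unfolding diam_path_def by metis
qed

lemma diam_bound_diam:
  assumes b: "diam_bound adj (supp N) B"
  shows "diam_bound adj (supp N) (diam adj N)"
  unfolding diam_bound_def
proof (intro allI impI)
  fix q assume "is_path adj q \<and> set q \<subseteq> supp N"
  then have "length q - 1 \<le> diam adj N" "q \<noteq> []" using diam_ge[OF b] is_pathD(1) by blast+
  then show "length q \<le> Suc (diam adj N)" by (cases q) auto
qed

lemma (in tree) diam_bound_card: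
  assumes "finite S" shows "diam_bound adj S (card S)"
  unfolding diam_bound_def
proof (intro allI impI)
  fix q assume q: "is_path adj q \<and> set q \<subseteq> S"
  have "length q = card (set q)" using path_distinct q by (simp add: distinct_card)
  also have "\<dots> \<le> card S" using q assms card_mono by blast
  finally show "length q \<le> Suc (card S)" by simp
qed

section \<open>Diameter and center of the shifted module\<close>

text \<open>N stands for \<sigma>M and S for supp M; the assumptions are the facts about supports that
  shift_support_of_flow_module derives from the reflection functor, and everything else in this
  section is combinatorics of paths.\<close>

locale shift_support = tree adj for adj :: "'v \<Rightarrow> 'v \<Rightarrow> bool" +
  fixes snk :: "'v \<Rightarrow> bool" and S :: "'v set" and N :: "('v, 'k) rep" and d :: nat and p :: "'v list"
  assumes bip: "bipartite_orientation adj snk"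
    and S_convex: "convex adj S"
    and supp_at_source: "\<And>a. \<not> snk a \<Longrightarrow> a \<in> supp N \<longleftrightarrow> a \<in> S"
    and sink_next_to_supp: "\<And>y x. snk y \<Longrightarrow> y \<notin> S \<Longrightarrow> adj y x \<Longrightarrow> x \<in> S \<Longrightarrow> y \<in> supp N"
    and sink_between_supp: "\<And>y x1 x2. snk y \<Longrightarrow> y \<in> S \<Longrightarrow> adj y x1 \<Longrightarrow> adj y x2 \<Longrightarrow> x1 \<noteq> x2 \<Longrightarrow> x1 \<in> S \<Longrightarrow> x2 \<in> S
       \<Longrightarrow> y \<in> supp N"
    and S_diam_bound: "diam_bound adj S d"
    and p_path: "is_path adj p" and p_in_S: "set p \<subseteq> S" and p_length: "length p = Suc d"
    and d_odd: "odd d" and p0_sink: "snk (p ! 0)"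
    and three_neighbours: "\<And>x. \<exists>a b c. adj x a \<and> adj x b \<and> adj x c \<and> a \<noteq> b \<and> b \<noteq> c \<and> a \<noteq> c"
begin

abbreviation "S' \<equiv> supp N"

lemma adj_snk_iff: "adj x y \<Longrightarrow> snk x \<longleftrightarrow> \<not> snk y"
  using bip unfolding bipartite_orientation_def by blast

lemma snk_parity: "is_path adj q \<Longrightarrow> i < length q \<Longrightarrow> (snk (q ! i) = snk (q ! 0)) = even i"
  using path_parity[OF bip] by blast

lemma new_vertex_is_sink: "x \<in> S' \<Longrightarrow> x \<notin> S \<Longrightarrow> snk x"
  using supp_at_source by blast

lemma interior_in_S:
  assumes q: "is_path adj q" "set q \<subseteq> S'" and t: "0 < t" "Suc t < length q"
  shows "q ! t \<in> S"
proof (cases "snk (q ! t)")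
  case False
  have "q ! t \<in> S'" using q t by auto
  then show ?thesis using supp_at_source False by blast
next
  case True
  have a1: "adj (q ! (t - 1)) (q ! t)" using is_pathD(2)[OF q(1), of "t - 1"] t by auto
  have a2: "adj (q ! t) (q ! (t + 1))" using is_pathD(2)[OF q(1), of t] t by auto
  have n1: "\<not> snk (q ! (t - 1))" using adj_snk_iff[OF a1] True by blast
  have n2: "\<not> snk (q ! (t + 1))" using adj_snk_iff[OF a2] True by blast
  have "t - 1 < length q" using t by auto
  then have "q ! (t - 1) \<in> S'" using q(2) nth_mem by blast
  then have s1: "q ! (t - 1) \<in> S" using supp_at_source[OF n1] by blast
  have "t + 1 < length q" using t by auto
  then have "q ! (t + 1) \<in> S'" using q(2) nth_mem by blast
  then have s2: "q ! (t + 1) \<in> S" using supp_at_source[OF n2] by blast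
  have ne: "q ! (t - 1) \<noteq> q ! (t + 1)" using is_pathD(3)[OF q(1), of "t - 1"] t by auto
  have "is_path adj [q ! (t - 1), q ! t, q ! (t + 1)]"
    using path_snoc[OF path_two[of adj "q ! (t - 1)" "q ! t", OF a1], of "q ! (t + 1)"] a2 ne by auto
  then have "set [q ! (t - 1), q ! t, q ! (t + 1)] \<subseteq> S" using S_convex s1 s2 unfolding convex_def by fastforce
  then show ?thesis by simp
qed

lemma all_in_S:
  assumes q: "is_path adj q" "set q \<subseteq> S'" and h: "hd q \<in> S" and l: "last q \<in> S"
  shows "set q \<subseteq> S"
proof
  fix x assume "x \<in> set q"
  then obtain t where t: "t < length q" "q ! t = x" by (auto simp: in_set_conv_nth)
  have qne: "q \<noteq> []" using is_pathD(1)[OF q(1)] .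
  show "x \<in> S"
  proof (cases "t = 0")
    case True then show ?thesis using h t qne hd_conv_nth by metis
  next
    case False
    show ?thesis
    proof (cases "Suc t = length q")
      case True then show ?thesis using l t qne by (metis diff_Suc_1 last_conv_nth)
    next
      case False2: False
      then show ?thesis using interior_in_S[OF q, of t] t False by auto
    qed
  qed
qed

lemma tl_in_S:
  assumes q: "is_path adj q" "set q \<subseteq> S'" and l: "last q \<in> S"
  shows "set (tl q) \<subseteq> S"
proof
  fix x assume "x \<in> set (tl q)"
  then obtain t where t: "t < length (tl q)" "tl q ! t = x" by (auto simp: in_set_conv_nth)
  have qne: "q \<noteq> []" using is_pathD(1)[OF q(1)] .
  have x: "x = q ! Suc t" using t by (simp add: nth_tl)
  show "x \<in> S"
  proof (cases "Suc (Suc t) = length q")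
    case True then show ?thesis using l x qne by (metis diff_Suc_1 last_conv_nth)
  next
    case False
    then show ?thesis using interior_in_S[OF q, of "Suc t"] t x by auto
  qed
qed

lemma butlast_in_S:
  assumes q: "is_path adj q" "set q \<subseteq> S'" and h: "hd q \<in> S"
  shows "set (butlast q) \<subseteq> S"
proof
  fix x assume "x \<in> set (butlast q)"
  then obtain t where t: "t < length (butlast q)" "butlast q ! t = x" by (auto simp: in_set_conv_nth)
  have qne: "q \<noteq> []" using is_pathD(1)[OF q(1)] .
  have x: "x = q ! t" using t by (simp add: nth_butlast)
  show "x \<in> S"
  proof (cases "t = 0")
    case True then show ?thesis using h x qne hd_conv_nth by metis
  next
    case False
    then show ?thesis using interior_in_S[OF q, of t] t x by auto
  qed
qed

lemma inner_in_S:
  assumes q: "is_path adj q" "set q \<subseteq> S'" and lq: "3 \<le> length q"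
  shows "is_path adj (drop 1 (take (length q - 1) q))" "set (drop 1 (take (length q - 1) q)) \<subseteq> S"
    "length (drop 1 (take (length q - 1) q)) = length q - 2"
    "set (drop 1 (take (length q - 1) q)) \<subseteq> set q"
proof -
  let ?r = "drop 1 (take (length q - 1) q)"
  show "length ?r = length q - 2" by simp
  show "set ?r \<subseteq> set q" by (auto dest: in_set_dropD in_set_takeD)
  show "set ?r \<subseteq> S"
  proof
    fix x assume "x \<in> set ?r"
    then obtain t where t: "t < length ?r" "?r ! t = x" by (auto simp: in_set_conv_nth)
    then have "x = q ! Suc t" by simp
    then show "x \<in> S" using interior_in_S[OF q, of "Suc t"] t by auto
  qed
  have e: "Suc (length q - 2) = length q - 1" using lq by simp
  show "is_path adj ?r" using path_slice[OF q(1), of 1 "length q - 2"] lq e by simp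
qed

lemma supp_shift_diam_bound: "diam_bound adj S' (Suc d)"
  unfolding diam_bound_def
proof (intro allI impI)
  fix q assume qq: "is_path adj q \<and> set q \<subseteq> S'"
  then have q: "is_path adj q" "set q \<subseteq> S'" by auto
  have qne: "q \<noteq> []" using is_pathD(1)[OF q(1)] .
  show "length q \<le> Suc (Suc d)"
  proof (cases "length q \<le> 2")
    case True then show ?thesis by simp
  next
    case False
    then have l3: "3 \<le> length q" by simp
    have hq: "hd q = q ! 0" using hd_conv_nth[OF qne] .
    have lq: "last q = q ! (length q - 1)" using qne by (simp add: last_conv_nth)
    have hS': "hd q \<in> S'" "last q \<in> S'" using q(2) qne by auto
    consider "hd q \<in> S" "last q \<in> S" | "hd q \<notin> S" "last q \<in> S" | "hd q \<in> S" "last q \<notin> S"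
      | "hd q \<notin> S" "last q \<notin> S" by blast
    then show ?thesis
    proof cases
      case 1
      then have "set q \<subseteq> S" using all_in_S[OF q] by blast
      then show ?thesis using S_diam_bound q unfolding diam_bound_def by fastforce
    next
      case 2
      have "set (tl q) \<subseteq> S" using tl_in_S[OF q 2(2)] .
      moreover have "is_path adj (tl q)" using path_drop[OF q(1), of 1] l3 by (simp add: drop_Suc)
      ultimately have "length (tl q) \<le> Suc d" using S_diam_bound unfolding diam_bound_def by blast
      then show ?thesis by simp
    next
      case 3
      have "set (butlast q) \<subseteq> S" using butlast_in_S[OF q 3(1)] .
      moreover have "is_path adj (butlast q)" using path_butlast(1)[OF q(1)] l3 by simp
      ultimately have "length (butlast q) \<le> Suc d" using S_diam_bound unfolding diam_bound_def by blast
      then show ?thesis by simp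
    next
      case 4
      have s1: "snk (q ! 0)" using new_vertex_is_sink hS' 4 hq by metis
      have s2: "snk (q ! (length q - 1))" using new_vertex_is_sink hS' 4 lq by metis
      have "even (length q - 1)" using snk_parity[OF q(1), of "length q - 1"] s1 s2 qne by auto
      note I = inner_in_S[OF q l3]
      have "length q - 2 \<le> Suc d" using S_diam_bound I unfolding diam_bound_def by metis
      then show ?thesis using \<open>even (length q - 1)\<close> d_odd l3 by presburger
    qed
  qed
qed

lemma diam_shift_ge: "is_path adj q \<Longrightarrow> set q \<subseteq> S' \<Longrightarrow> length q - 1 \<le> diam adj N"
  using diam_ge[OF supp_shift_diam_bound] by blast

lemma diam_bound_shift: "diam_bound adj S' (diam adj N)"
  using diam_bound_diam[OF supp_shift_diam_bound] .

lemma p_last_is_source: "\<not> snk (p ! d)"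
  using snk_parity[OF p_path, of d] p_length d_odd p0_sink by auto

lemma p_in_supp_shift: assumes "1 \<le> t" "t \<le> d" shows "p ! t \<in> S'"
proof (cases "even t")
  case False
  then have "\<not> snk (p ! t)" using snk_parity[OF p_path, of t] p_length assms p0_sink by auto
  moreover have "p ! t \<in> S" using p_in_S p_length assms by auto
  ultimately show ?thesis using supp_at_source by blast
next
  case True
  have t2: "2 \<le> t" using True assms by presburger
  have "t \<noteq> d" using True d_odd by auto
  then have t2': "t < d" using assms by simp
  note t2 = t2 t2'
  have sk: "snk (p ! t)" using snk_parity[OF p_path, of t] p_length assms p0_sink True by auto
  have a1: "adj (p ! (t - 1)) (p ! t)" using is_pathD(2)[OF p_path, of "t - 1"] t2 p_length by auto
  have a2: "adj (p ! t) (p ! (t + 1))" using is_pathD(2)[OF p_path, of t] t2 p_length by auto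
  have ne: "p ! (t - 1) \<noteq> p ! (t + 1)" using is_pathD(3)[OF p_path, of "t - 1"] t2 p_length by auto
  have inS: "p ! t \<in> S" "p ! (t - 1) \<in> S" "p ! (t + 1) \<in> S" using p_in_S p_length t2 by auto
  show ?thesis using sink_between_supp[OF sk inS(1) adj_sym[OF a1] a2 ne inS(2,3)] .
qed

lemma extension_facts:
  assumes b: "adj (p ! d) b" "b \<noteq> p ! (d - 1)"
  shows "is_path adj (p @ [b])" "snk b" "b \<notin> S" "b \<in> S'"
proof -
  have pne: "p \<noteq> []" using is_pathD(1)[OF p_path] .
  have "last p = p ! d" using p_length pne by (simp add: last_conv_nth)
  moreover have "p ! (length p - 2) = p ! (d - 1)" using p_length by simp
  ultimately show pb: "is_path adj (p @ [b])" using path_snoc[OF p_path] b by metis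
  show "snk b" using adj_snk_iff[OF b(1)] p_last_is_source by blast
  show bS': "b \<notin> S"
  proof
    assume "b \<in> S"
    then have "set (p @ [b]) \<subseteq> S" using p_in_S by auto
    then have "length (p @ [b]) \<le> Suc d" using S_diam_bound pb unfolding diam_bound_def by blast
    then show False using p_length by simp
  qed
  have "p ! d \<in> S" using p_in_S p_length by auto
  then show "b \<in> S'" using sink_next_to_supp[OF \<open>snk b\<close> bS' adj_sym[OF b(1)]] by blast
qed

lemma d_ge_1: "1 \<le> d" using d_odd by presburger

lemma shifted_path_facts:
  assumes b: "adj (p ! d) b" "b \<noteq> p ! (d - 1)"
  shows "is_path adj (tl p @ [b])" "set (tl p @ [b]) \<subseteq> S'" "length (tl p @ [b]) = Suc d"
    "\<And>t. t < d \<Longrightarrow> (tl p @ [b]) ! t = p ! Suc t" "set (tl p) \<subseteq> set (tl p @ [b])"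
proof -
  have tp: "is_path adj (tl p)" using path_drop[OF p_path, of 1] p_length d_ge_1 by (simp add: drop_Suc)
  have tne: "tl p \<noteq> []" using p_length d_ge_1 by (cases p) auto
  have "last (tl p) = last p" using tne by (simp add: last_tl)
  also have "\<dots> = p ! d" using p_length is_pathD(1)[OF p_path] by (simp add: last_conv_nth)
  finally have "last (tl p) = p ! d" .
  moreover have "2 \<le> length (tl p) \<Longrightarrow> tl p ! (length (tl p) - 2) = p ! (d - 1)"
  proof -
    assume a: "2 \<le> length (tl p)"
    then have "Suc (d - 2) = d - 1" using p_length by simp
    then show ?thesis using a p_length by (simp add: nth_tl)
  qed
  ultimately show "is_path adj (tl p @ [b])" using path_snoc[OF tp] b by metis
  show "length (tl p @ [b]) = Suc d" using p_length by simp
  show nt: "\<And>t. t < d \<Longrightarrow> (tl p @ [b]) ! t = p ! Suc t" using p_length by (simp add: nth_append nth_tl)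
  show "set (tl p) \<subseteq> set (tl p @ [b])" by auto
  show "set (tl p @ [b]) \<subseteq> S'"
  proof
    fix x assume "x \<in> set (tl p @ [b])"
    then consider "x \<in> set (tl p)" | "x = b" by auto
    then show "x \<in> S'"
    proof cases
      case 1
      then obtain t where "t < length (tl p)" "tl p ! t = x" by (auto simp: in_set_conv_nth)
      then have "x = p ! Suc t" "1 \<le> Suc t" "Suc t \<le> d" using p_length by (auto simp: nth_tl)
      then show ?thesis using p_in_supp_shift by blast
    next
      case 2 then show ?thesis using extension_facts[OF b] by blast
    qed
  qed
qed

lemma two_extensions: "\<exists>b b'. adj (p ! d) b \<and> adj (p ! d) b' \<and> b \<noteq> p ! (d - 1) \<and> b' \<noteq> p ! (d - 1) \<and> b \<noteq> b'"
proof -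
  obtain a b c where "adj (p ! d) a" "adj (p ! d) b" "adj (p ! d) c" "a \<noteq> b" "b \<noteq> c" "a \<noteq> c"
    using three_neighbours by blast
  then show ?thesis by metis
qed

lemma extension_exists: "\<exists>b. adj (p ! d) b \<and> b \<noteq> p ! (d - 1)"
  using two_extensions by blast

lemma diam_shift_lower: "d \<le> diam adj N"
proof -
  obtain b where b: "adj (p ! d) b" "b \<noteq> p ! (d - 1)" using extension_exists by blast
  note P = shifted_path_facts[OF b]
  show ?thesis using diam_shift_ge[OF P(1,2)] P(3) by simp
qed

lemma diam_shift_upper: "diam adj N \<le> Suc d"
proof -
  obtain b where b: "adj (p ! d) b" "b \<noteq> p ! (d - 1)" using extension_exists by blast
  note P = shifted_path_facts[OF b]
  obtain q where q: "diam_path adj N q" using diam_path_exists[OF supp_shift_diam_bound P(1,2)] by blast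
  then have "length q \<le> Suc (Suc d)" using supp_shift_diam_bound unfolding diam_bound_def diam_path_def by blast
  then show ?thesis using q unfolding diam_path_def by linarith
qed

lemma diam_shift_ge2_if_d1: assumes "d = 1" shows "2 \<le> diam adj N"
proof -
  obtain b b' where b: "adj (p ! d) b" "adj (p ! d) b'" "b \<noteq> p ! (d - 1)" "b' \<noteq> p ! (d - 1)" "b \<noteq> b'"
    using two_extensions by blast
  have i1: "b \<in> S'" "b' \<in> S'" using extension_facts(4) b by blast+
  have i2: "p ! d \<in> S'" using p_in_supp_shift[of d] d_ge_1 by simp
  have "is_path adj [b, p ! d, b']"
    using path_snoc[OF path_two[of adj b "p ! d", OF adj_sym[OF b(1)]], of b'] b by auto
  moreover have "set [b, p ! d, b'] \<subseteq> S'" using i1 i2 by auto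
  ultimately show ?thesis using diam_shift_ge[of "[b, p ! d, b']"] by fastforce
qed

lemma extended_path_in_supp_shift:
  assumes b: "adj (p ! d) b" "b \<noteq> p ! (d - 1)" and a0: "p ! 0 \<in> S'"
  shows "set (p @ [b]) \<subseteq> S'"
proof
  note B = extension_facts[OF b]
  fix x assume "x \<in> set (p @ [b])"
  then consider "x = b" | t where "t < Suc d" "x = p ! t" using p_length by (auto simp: in_set_conv_nth)
  then show "x \<in> S'"
  proof cases
    case 1 then show ?thesis using B by simp
  next
    case (2 t) then show ?thesis using p_in_supp_shift[of t] a0 by (cases t) auto
  qed
qed

lemma diam_shift_grows_if_start_kept: assumes "p ! 0 \<in> S'" shows "Suc d \<le> diam adj N"
proof -
  obtain b where b: "adj (p ! d) b" "b \<noteq> p ! (d - 1)" using extension_exists by blast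
  show ?thesis
    using diam_shift_ge[OF extension_facts(1)[OF b] extended_path_in_supp_shift[OF b assms]] p_length by simp
qed

lemma diam_pathD:
  assumes "diam_path adj N q"
  shows "is_path adj q" "set q \<subseteq> S'" "length q = Suc (diam adj N)"
proof -
  show "is_path adj q" "set q \<subseteq> S'" using assms unfolding diam_path_def by auto
  then have "q \<noteq> []" using is_pathD(1) by blast
  then show "length q = Suc (diam adj N)" using assms unfolding diam_path_def by (cases q) auto
qed

lemma path_center_odd:
  assumes "length Q = Suc d"
  shows "path_center Q = {Q ! (d div 2), Q ! (d div 2 + 1)}"
  using assms d_odd unfolding path_center_def Let_def by simp

lemma path_center_even:
  assumes "length Q = Suc (Suc d)"
  shows "path_center Q = {Q ! (d div 2 + 1)}"
proof -
  have "even (Suc d)" using d_odd by simp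
  moreover have "Suc d div 2 = d div 2 + 1" using d_odd by presburger
  ultimately show ?thesis using assms unfolding path_center_def Let_def by simp
qed

lemma diam_path_has_long_part_in_S:
  assumes dN: "diam adj N = d" and q: "diam_path adj N q"
  obtains q0 where "is_path adj q0" "set q0 \<subseteq> S" "set q0 \<subseteq> set q" "length q0 = d"
proof -
  have qp: "is_path adj q" "set q \<subseteq> S'" and lq: "length q = Suc d"
    using diam_pathD[OF q] dN by auto
  have qne: "q \<noteq> []" using lq by auto
  have hq: "hd q = q ! 0" using hd_conv_nth[OF qne] .
  have lq': "last q = q ! d" using qne lq by (simp add: last_conv_nth)
  have pq: "snk (q ! d) \<noteq> snk (q ! 0)" using snk_parity[OF qp(1), of d] lq d_odd by auto
  consider "hd q \<in> S" "last q \<in> S" | "hd q \<notin> S" "last q \<in> S" | "hd q \<in> S" "last q \<notin> S"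
    | "hd q \<notin> S" "last q \<notin> S" by blast
  then show ?thesis
  proof cases
    case 1
    \<comment> \<open>then q lies in S, and prolonging it at its source end leaves S but stays in supp N\<close>
    have qS: "set q \<subseteq> S" using all_in_S[OF qp 1] .
    define q' where "q' = (if snk (last q) then rev q else q)"
    have q'p: "is_path adj q'" using qp(1) path_rev_tree unfolding q'_def by auto
    have sq': "set q' = set q" unfolding q'_def by auto
    have lq'': "length q' = Suc d" using lq unfolding q'_def by auto
    have nsk: "\<not> snk (last q')"
      using pq hq lq' qne unfolding q'_def by (auto simp: last_rev)
    have q'ne: "q' \<noteq> []" using lq'' by auto
    obtain a1 a2 a3 where "adj (last q') a1" "adj (last q') a2" "adj (last q') a3"
      "a1 \<noteq> a2" "a2 \<noteq> a3" "a1 \<noteq> a3" using three_neighbours by blast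
    then obtain c where c: "adj (last q') c" "c \<noteq> q' ! (d - 1)" by metis
    have cp: "is_path adj (q' @ [c])" using path_snoc[OF q'p c(1)] c(2) lq'' by auto
    have "c \<notin> S"
    proof
      assume "c \<in> S"
      then have "set (q' @ [c]) \<subseteq> S" using qS sq' by auto
      then have "length (q' @ [c]) \<le> Suc d" using S_diam_bound cp unfolding diam_bound_def by blast
      then show False using lq'' by simp
    qed
    moreover have "snk c" using adj_snk_iff[OF c(1)] nsk by blast
    moreover have "last q' \<in> S" using qS sq' q'ne by auto
    ultimately have "c \<in> S'" using sink_next_to_supp[OF _ _ adj_sym[OF c(1)]] by blast
    then have "set (q' @ [c]) \<subseteq> S'" using qp(2) sq' by auto
    then have "length (q' @ [c]) - 1 \<le> diam adj N" using diam_shift_ge[OF cp] by blast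
    then show ?thesis using lq'' dN by simp
  next
    case 2
    show ?thesis
    proof (rule that[of "tl q"])
      show "is_path adj (tl q)" using path_drop[OF qp(1), of 1] lq d_ge_1 by (simp add: drop_Suc)
      show "set (tl q) \<subseteq> S" using tl_in_S[OF qp 2(2)] .
      show "set (tl q) \<subseteq> set q" by (cases q) auto
      show "length (tl q) = d" using lq by simp
    qed
  next
    case 3
    show ?thesis
    proof (rule that[of "butlast q"])
      show "is_path adj (butlast q)" using path_butlast(1)[OF qp(1)] lq d_ge_1 by simp
      show "set (butlast q) \<subseteq> S" using butlast_in_S[OF qp 3(1)] .
      show "set (butlast q) \<subseteq> set q" by (rule in_set_butlastD[THEN subsetI])
      show "length (butlast q) = d" using lq by simp
    qed
  next
    case 4
    have "hd q \<in> S'" "last q \<in> S'" using qp(2) qne by auto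
    then have "snk (q ! 0)" "snk (q ! d)" using new_vertex_is_sink 4 hq lq' by metis+
    then show ?thesis using pq by simp
  qed
qed

lemma center_if_diam_kept:
  assumes dN: "diam adj N = d" and q: "diam_path adj N q"
  shows "path_center q = {p ! (d div 2 + 1), p ! (d div 2 + 2)}"
proof -
  have qp: "is_path adj q" "set q \<subseteq> S'" and lq: "length q = Suc d"
    using diam_pathD[OF q] dN by auto
  have "d \<noteq> 1" using diam_shift_ge2_if_d1 dN by auto
  then have d3: "3 \<le> d" using d_odd d_ge_1 by presburger
  have a0: "p ! 0 \<notin> S'" using diam_shift_grows_if_start_kept dN by fastforce
  obtain b where b: "adj (p ! d) b" "b \<noteq> p ! (d - 1)" using extension_exists by blast
  note P = shifted_path_facts[OF b]
  obtain q0 where q0: "is_path adj q0" "set q0 \<subseteq> S" "set q0 \<subseteq> set q" "length q0 = d"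
    using diam_path_has_long_part_in_S[OF dN q] .
  have "set q0 \<inter> set p \<noteq> {}" using long_paths_intersect[OF S_convex S_diam_bound q0(1,2) p_path p_in_S] p_length q0(4) by simp
  then obtain w where w: "w \<in> set q0" "w \<in> set p" by blast
  have wq: "w \<in> S'" using w(1) q0(3) qp(2) by blast
  have pne: "p \<noteq> []" using p_length by auto
  have "p = p ! 0 # tl p" using pne by (cases p) auto
  then have "w \<in> set (tl p)" using w(2) wq a0 by (metis set_ConsD)
  then have int: "set (tl p @ [b]) \<inter> set q \<noteq> {}" using w(1) q0(3) by auto
  have bN: "diam_bound adj S' d" using diam_bound_shift dN by simp
  from diameter_path_alignment[OF bN P(1,2) qp lq int] obtain Q' where Q'1: "Q' = q \<or> Q' = rev q"
    and "\<exists>i k e. i \<le> k \<and> k < length (tl p @ [b]) \<and> e + length (tl p @ [b]) \<le> Suc d \<and>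
     2 * i + e \<le> d \<and> length (tl p @ [b]) \<le> Suc (2 * k + e) \<and>
     (\<forall>t. i \<le> t \<and> t \<le> k \<longrightarrow> Q' ! (t + e) = (tl p @ [b]) ! t)" by blast
  then obtain i k e where H: "i \<le> k" "e + length (tl p @ [b]) \<le> Suc d"
     "2 * i + e \<le> d" "length (tl p @ [b]) \<le> Suc (2 * k + e)"
     "\<And>t. i \<le> t \<Longrightarrow> t \<le> k \<Longrightarrow> Q' ! (t + e) = (tl p @ [b]) ! t" by blast
  define r where "r = d div 2"
  have dr: "d = 2 * r + 1" unfolding r_def using d_odd by presburger
  have e0: "e = 0" using H(2) P(3) by simp
  have ir: "i \<le> r" using H(3) e0 dr by simp
  have kr: "r + 1 \<le> k" using H(4) e0 dr P(3) by simp
  have E1: "Q' ! r = p ! (r + 1)" using H(5)[of r] ir kr e0 P(4)[of r] dr by simp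
  have E2: "Q' ! (r + 1) = p ! (r + 2)" using H(5)[of "r + 1"] ir kr e0 P(4)[of "r + 1"] dr d3 by simp
  have lQ': "length Q' = Suc d" using Q'1 lq by auto
  have "path_center Q' = {p ! (r + 1), p ! (r + 2)}" using path_center_odd[OF lQ'] E1 E2 r_def by simp
  moreover have "path_center q = path_center Q'" using Q'1 path_center_rev by metis
  ultimately show ?thesis unfolding r_def by simp
qed

lemma ends_are_sinks_if_diam_grows:
  assumes dN: "diam adj N = Suc d" and q: "diam_path adj N q"
  shows "snk (hd q) \<and> snk (last q)"
proof -
  have qp: "is_path adj q" "set q \<subseteq> S'" and lq: "length q = Suc (Suc d)"
    using diam_pathD[OF q] dN by auto
  have qne: "q \<noteq> []" using lq by auto
  have hq: "hd q = q ! 0" using hd_conv_nth[OF qne] .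
  have lq': "last q = q ! Suc d" using qne lq by (simp add: last_conv_nth)
  have pq: "snk (q ! Suc d) = snk (q ! 0)" using snk_parity[OF qp(1), of "Suc d"] lq d_odd by auto
  have "\<not> (hd q \<in> S \<and> last q \<in> S)"
  proof
    assume "hd q \<in> S \<and> last q \<in> S"
    then have "set q \<subseteq> S" using all_in_S[OF qp] by blast
    then have "length q \<le> Suc d" using S_diam_bound qp unfolding diam_bound_def by blast
    then show False using lq by simp
  qed
  moreover have "hd q \<in> S'" "last q \<in> S'" using qp(2) qne by auto
  ultimately have "snk (hd q) \<or> snk (last q)" using new_vertex_is_sink by blast
  then show ?thesis using pq hq lq' by auto
qed

lemma middle_of_diam_path_if_start_kept:
  assumes dN: "diam adj N = Suc d" and q: "diam_path adj N q"
    and a0: "p ! 0 \<in> S'" and int: "set p \<inter> set q \<noteq> {}"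
  obtains Q' where "Q' = q \<or> Q' = rev q" "Q' ! (d div 2 + 1) = p ! (d div 2 + 1)"
proof -
  have qp: "is_path adj q" "set q \<subseteq> S'" and lq: "length q = Suc (Suc d)"
    using diam_pathD[OF q] dN by auto
  obtain b where b: "adj (p ! d) b" "b \<noteq> p ! (d - 1)" using extension_exists by blast
  note B = extension_facts[OF b]
  have PS: "set (p @ [b]) \<subseteq> S'" using extended_path_in_supp_shift[OF b a0] .
  have int': "set (p @ [b]) \<inter> set q \<noteq> {}" using int by auto
  have bN: "diam_bound adj S' (Suc d)" using diam_bound_shift dN by simp
  from diameter_path_alignment[OF bN B(1) PS qp lq int'] obtain Q' where Q'1: "Q' = q \<or> Q' = rev q"
    and "\<exists>i k e. i \<le> k \<and> k < length (p @ [b]) \<and> e + length (p @ [b]) \<le> Suc (Suc d) \<and>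
     2 * i + e \<le> Suc d \<and> length (p @ [b]) \<le> Suc (2 * k + e) \<and>
     (\<forall>t. i \<le> t \<and> t \<le> k \<longrightarrow> Q' ! (t + e) = (p @ [b]) ! t)" by blast
  then obtain i k e where H: "i \<le> k" "e + length (p @ [b]) \<le> Suc (Suc d)"
     "2 * i + e \<le> Suc d" "length (p @ [b]) \<le> Suc (2 * k + e)"
     "\<And>t. i \<le> t \<Longrightarrow> t \<le> k \<Longrightarrow> Q' ! (t + e) = (p @ [b]) ! t" by blast
  define r where "r = d div 2"
  have dr: "d = 2 * r + 1" unfolding r_def using d_odd by presburger
  have e0: "e = 0" using H(2) p_length by simp
  have ir: "i \<le> r + 1" using H(3) e0 dr by simp
  have kr: "r + 1 \<le> k" using H(4) e0 dr p_length by simp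
  have "Q' ! (r + 1) = (p @ [b]) ! (r + 1)" using H(5)[of "r + 1"] ir kr e0 by simp
  also have "\<dots> = p ! (r + 1)" using p_length dr by (simp add: nth_append)
  finally show ?thesis using that Q'1 unfolding r_def by blast
qed

lemma middle_of_diam_path_if_start_dropped:
  assumes dN: "diam adj N = Suc d" and q: "diam_path adj N q"
    and a0: "p ! 0 \<notin> S'" and int: "set p \<inter> set q \<noteq> {}"
  obtains Q' where "Q' = q \<or> Q' = rev q" "Q' ! (d div 2 + 1) = p ! (d div 2 + 1)"
proof -
  have qp: "is_path adj q" "set q \<subseteq> S'" and lq: "length q = Suc (Suc d)"
    using diam_pathD[OF q] dN by auto
  have qne: "q \<noteq> []" using lq by auto
  have sk: "snk (q ! 0)" "snk (q ! Suc d)"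
    using ends_are_sinks_if_diam_grows[OF dN q] hd_conv_nth[OF qne] qne lq by (auto simp: last_conv_nth)
  obtain b where b: "adj (p ! d) b" "b \<noteq> p ! (d - 1)" using extension_exists by blast
  note P = shifted_path_facts[OF b]
  obtain w where w: "w \<in> set p" "w \<in> set q" using int by blast
  have pne: "p \<noteq> []" using p_length by auto
  have "w \<in> S'" using w(2) qp(2) by blast
  moreover have "p = p ! 0 # tl p" using pne by (cases p) auto
  ultimately have "w \<in> set (tl p)" using w(1) a0 by (metis set_ConsD)
  then have int': "set (tl p @ [b]) \<inter> set q \<noteq> {}" using w(2) by auto
  have bN: "diam_bound adj S' (Suc d)" using diam_bound_shift dN by simp
  from diameter_path_alignment[OF bN P(1,2) qp lq int'] obtain Q' where Q'1: "Q' = q \<or> Q' = rev q"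
    and "\<exists>i k e. i \<le> k \<and> k < length (tl p @ [b]) \<and> e + length (tl p @ [b]) \<le> Suc (Suc d) \<and>
     2 * i + e \<le> Suc d \<and> length (tl p @ [b]) \<le> Suc (2 * k + e) \<and>
     (\<forall>t. i \<le> t \<and> t \<le> k \<longrightarrow> Q' ! (t + e) = (tl p @ [b]) ! t)" by blast
  then obtain i k e where H: "i \<le> k" "e + length (tl p @ [b]) \<le> Suc (Suc d)"
     "2 * i + e \<le> Suc d" "length (tl p @ [b]) \<le> Suc (2 * k + e)"
     "\<And>t. i \<le> t \<Longrightarrow> t \<le> k \<Longrightarrow> Q' ! (t + e) = (tl p @ [b]) ! t" by blast
  \<comment> \<open>the offset e is 0 or 1, and parity of sinks along both paths rules out 0\<close>
  have e1: "e \<le> 1" using H(2) P(3) by simp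
  have Q'p: "is_path adj Q'" using Q'1 qp(1) path_rev_tree by auto
  have lQ': "length Q' = Suc (Suc d)" using Q'1 lq by auto
  have Q'0: "snk (Q' ! 0)" using Q'1 sk lq by (auto simp: rev_nth)
  have ik: "i < length (tl p @ [b])" using H(3) P(3) by linarith
  have p1: "\<not> snk (p ! 1)" using snk_parity[OF p_path, of 1] p_length d_ge_1 p0_sink by auto
  have P0: "(tl p @ [b]) ! 0 = p ! 1" using P(4)[of 0] d_ge_1 by simp
  have par1: "(snk ((tl p @ [b]) ! i) = snk ((tl p @ [b]) ! 0)) = even i" using snk_parity[OF P(1) ik] .
  have "i + e < length Q'" using lQ' ik e1 P(3) by linarith
  then have par2: "(snk (Q' ! (i + e)) = snk (Q' ! 0)) = even (i + e)" using snk_parity[OF Q'p] by blast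
  have eqi: "Q' ! (i + e) = (tl p @ [b]) ! i" using H(5)[of i] H(1) by simp
  have "odd e" using par1 par2 eqi P0 p1 Q'0 by auto
  then have e1': "e = 1" using e1 by presburger
  define r where "r = d div 2"
  have dr: "d = 2 * r + 1" unfolding r_def using d_odd by presburger
  have ir: "i \<le> r" using H(3) e1' dr by simp
  have kr: "r \<le> k" using H(4) e1' dr P(3) by simp
  have "Q' ! (r + 1) = (tl p @ [b]) ! r" using H(5)[of r] ir kr e1' by simp
  also have "\<dots> = p ! (r + 1)" using P(4)[of r] dr by simp
  finally show ?thesis using that Q'1 unfolding r_def by blast
qed

lemma center_if_diam_grows:
  assumes dN: "diam adj N = Suc d" and q: "diam_path adj N q"
  shows "path_center q = {p ! (d div 2 + 1)}"
proof -
  have qp: "is_path adj q" "set q \<subseteq> S'" and lq: "length q = Suc (Suc d)"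
    using diam_pathD[OF q] dN by auto
  have l3: "3 \<le> length q" using lq d_ge_1 by simp
  note I = inner_in_S[OF qp l3]
  have "set (drop 1 (take (length q - 1) q)) \<inter> set p \<noteq> {}"
    using long_paths_intersect[OF S_convex S_diam_bound I(1,2) p_path p_in_S] p_length I(3) lq by simp
  then have int: "set p \<inter> set q \<noteq> {}" using I(4) by blast
  obtain Q' where Q': "Q' = q \<or> Q' = rev q" "Q' ! (d div 2 + 1) = p ! (d div 2 + 1)"
    using middle_of_diam_path_if_start_kept[OF dN q _ int]
      middle_of_diam_path_if_start_dropped[OF dN q _ int] by blast
  have "path_center q = path_center Q'" using Q'(1) path_center_rev by metis
  also have "\<dots> = {p ! (d div 2 + 1)}"
    using path_center_even[of Q'] Q' lq by (metis length_rev)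
  finally show ?thesis .
qed

theorem shift_diam_center:
  "d \<le> diam adj N \<and> diam adj N \<le> d + 1 \<and>
   (diam adj N = d \<longrightarrow> flow_module adj N \<and>
      (\<forall>b. adj (p ! d) b \<and> b \<noteq> p ! (d - 1) \<longrightarrow> diam_path adj N (tl p @ [b])) \<and>
      center adj N = {p ! (d div 2 + 1), p ! (d div 2 + 2)}) \<and>
   (diam adj N = d + 1 \<longrightarrow> source_module adj (\<lambda>a. \<not> snk a) N \<and> center adj N = {p ! (d div 2 + 1)})"
proof -
  obtain b0 where b0: "adj (p ! d) b0" "b0 \<noteq> p ! (d - 1)" using extension_exists by blast
  have ex: "\<exists>q. diam_path adj N q" using diam_path_exists[OF supp_shift_diam_bound shifted_path_facts(1,2)[OF b0]] .
  have sq: "diam_path adj N (SOME q. diam_path adj N q)" using someI_ex[OF ex] .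
  show ?thesis
  proof (intro conjI impI allI)
    show "d \<le> diam adj N" by (rule diam_shift_lower)
    show "diam adj N \<le> d + 1" using diam_shift_upper by simp
    assume dN: "diam adj N = d"
    then show "flow_module adj N" unfolding flow_module_def using d_odd by simp
    show "center adj N = {p ! (d div 2 + 1), p ! (d div 2 + 2)}"
      unfolding center_def using center_if_diam_kept[OF dN sq] .
    fix b assume b: "adj (p ! d) b \<and> b \<noteq> p ! (d - 1)"
    note P = shifted_path_facts[of b]
    show "diam_path adj N (tl p @ [b])" unfolding diam_path_def using P b dN by auto
  next
    assume dN: "diam adj N = d + 1"
    then have dN': "diam adj N = Suc d" by simp
    show "source_module adj (\<lambda>a. \<not> snk a) N"
      unfolding source_module_def using ends_are_sinks_if_diam_grows[OF dN'] by auto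
    show "center adj N = {p ! (d div 2 + 1)}"
      unfolding center_def using center_if_diam_grows[OF dN' sq] .
  qed
qed

end

section \<open>Subspaces of coordinate vector spaces\<close>

lemma mult_mat_vec_index:
  assumes "K \<in> carrier_mat T k" "v \<in> carrier_vec k" "i < T"
  shows "(K *\<^sub>v v) $ i = (\<Sum>j = 0..<k. K $$ (i, j) * v $ j)"
  using assms by (auto simp: scalar_prod_def intro!: sum.cong)

lemma subspD:
  assumes "subsp n U"
  shows "U \<subseteq> carrier_vec n" "0\<^sub>v n \<in> U" "\<And>u v. u \<in> U \<Longrightarrow> v \<in> U \<Longrightarrow> u + v \<in> U"
    "\<And>c u. u \<in> U \<Longrightarrow> c \<cdot>\<^sub>v u \<in> U"
  using assms unfolding subsp_def by auto

lemma subsp_carrier: "subsp n (carrier_vec n)"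
  unfolding subsp_def by auto

lemma subsp_zero: "subsp n {0\<^sub>v n}"
  unfolding subsp_def by auto

lemma injective_mat_cols_le_rows:
  fixes K :: "'a::field mat"
  assumes K: "K \<in> carrier_mat T k" and inj: "\<forall>v\<in>carrier_vec k. K *\<^sub>v v = 0\<^sub>v T \<longrightarrow> v = 0\<^sub>v k"
  shows "k \<le> T"
proof -
  interpret vec_space "TYPE('a)" T .
  have lc: "length (cols K) = k" using K by simp
  have dist: "distinct (cols K)"
  proof (rule ccontr)
    assume "\<not> distinct (cols K)"
    then obtain i j where ij: "i < k" "j < k" "i \<noteq> j" "cols K ! i = cols K ! j"
      using lc by (metis distinct_conv_nth)
    then have cij: "col K i = col K j" using K by simp
    define v :: "'a vec" where "v = unit_vec k i - unit_vec k j"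
    have vc: "v \<in> carrier_vec k" unfolding v_def by simp
    have "K *\<^sub>v v = 0\<^sub>v T"
    proof (rule eq_vecI)
      show "dim_vec (K *\<^sub>v v) = dim_vec (0\<^sub>v T)" using K by simp
      fix r assume r: "r < dim_vec (0\<^sub>v T)"
      then have r': "r < T" by simp
      have "(K *\<^sub>v v) $ r = (\<Sum>l = 0..<k. K $$ (r, l) * v $ l)" using mult_mat_vec_index[OF K vc r'] .
      also have "\<dots> = (\<Sum>l = 0..<k. K $$ (r, l) * ((if l = i then 1 else 0) - (if l = j then 1 else 0)))"
        unfolding v_def by (intro sum.cong) (auto simp: unit_vec_def)
      also have "\<dots> = (\<Sum>l = 0..<k. K $$ (r, l) * (if l = i then 1 else 0)) - (\<Sum>l = 0..<k. K $$ (r, l) * (if l = j then 1 else 0))"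
        by (simp add: right_diff_distrib sum_subtractf)
      also have "\<dots> = (\<Sum>l = 0..<k. (if l = i then K $$ (r, l) else 0)) - (\<Sum>l = 0..<k. (if l = j then K $$ (r, l) else 0))"
        by (intro arg_cong2[where f = "(-)"] sum.cong) auto
      also have "\<dots> = K $$ (r, i) - K $$ (r, j)" using ij by simp
      also have "\<dots> = 0" using cij r' ij K by (metis carrier_matD index_col cancel_comm_monoid_add_class.diff_cancel)
      finally show "(K *\<^sub>v v) $ r = 0\<^sub>v T $ r" using r' by simp
    qed
    then have "v = 0\<^sub>v k" using inj vc by blast
    moreover have "v $ i = 1" unfolding v_def using ij by simp
    ultimately show False using ij by simp
  qed
  have li: "lin_indpt (set (cols K))"
  proof
    assume "lin_dep (set (cols K))"
    from lin_depE[OF K this dist] obtain v where "v \<in> carrier_vec k" "v \<noteq> 0\<^sub>v k" "K *\<^sub>v v = 0\<^sub>v T" .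
    then show False using inj by blast
  qed
  have "dim_row K = T" using K by simp
  then have sc: "set (cols K) \<subseteq> carrier_vec T" using cols_dim[of K] by simp
  have "card (set (cols K)) \<le> dim" using li_le_dim(2)[OF fin_dim sc li] .
  then show ?thesis using dim_is_n distinct_card[OF dist] lc by simp
qed

lemma vec_carrier_0: "v \<in> carrier_vec 0 \<Longrightarrow> v = 0\<^sub>v 0"
  by (rule eq_vecI) auto

lemma mult_mat_vec_in_subsp:
  assumes V: "subsp T V" and K: "K \<in> carrier_mat T k" and cols: "\<forall>j<k. col K j \<in> V"
    and v: "v \<in> carrier_vec k"
  shows "K *\<^sub>v v \<in> V"
proof -
  note Vd = subspD[OF V]
  have "j \<le> k \<Longrightarrow> vec T (\<lambda>i. \<Sum>l = 0..<j. K $$ (i, l) * v $ l) \<in> V" for j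
  proof (induction j)
    case 0
    have "vec T (\<lambda>i. \<Sum>l = 0..<0. K $$ (i, l) * v $ l) = 0\<^sub>v T" by (rule eq_vecI) auto
    then show ?case using Vd(2) by simp
  next
    case (Suc j)
    have e: "vec T (\<lambda>i. \<Sum>l = 0..<Suc j. K $$ (i, l) * v $ l) =
      vec T (\<lambda>i. \<Sum>l = 0..<j. K $$ (i, l) * v $ l) + v $ j \<cdot>\<^sub>v col K j"
      using K Suc.prems by (intro eq_vecI) (auto simp: mult.commute)
    have "col K j \<in> V" using cols Suc.prems by simp
    then show ?case unfolding e using Suc Vd by auto
  qed
  from this[of k] have "vec T (\<lambda>i. \<Sum>l = 0..<k. K $$ (i, l) * v $ l) \<in> V" by simp
  moreover have "K *\<^sub>v v = vec T (\<lambda>i. \<Sum>l = 0..<k. K $$ (i, l) * v $ l)"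
    using K v mult_mat_vec_index[OF K v] by (intro eq_vecI) auto
  ultimately show ?thesis by simp
qed

lemma append_col_injective:
  fixes K :: "'a::field mat"
  assumes K: "K \<in> carrier_mat T k" and inj: "\<forall>v\<in>carrier_vec k. K *\<^sub>v v = 0\<^sub>v T \<longrightarrow> v = 0\<^sub>v k"
    and wc: "w \<in> carrier_vec T" and nw: "w \<notin> {K *\<^sub>v v | v. v \<in> carrier_vec k}"
  defines "Kw \<equiv> mat T (Suc k) (\<lambda>(i, j). if j < k then K $$ (i, j) else w $ i)"
  shows "\<forall>v\<in>carrier_vec (Suc k). Kw *\<^sub>v v = 0\<^sub>v T \<longrightarrow> v = 0\<^sub>v (Suc k)"
proof (intro ballI impI)
  fix v' :: "'a vec" assume v': "v' \<in> carrier_vec (Suc k)" and z: "Kw *\<^sub>v v' = 0\<^sub>v T"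
  have Kwc: "Kw \<in> carrier_mat T (Suc k)" unfolding Kw_def by simp
  define v :: "'a vec" where "v = vec k (\<lambda>j. v' $ j)"
  define c where "c = v' $ k"
  have vc: "v \<in> carrier_vec k" unfolding v_def by simp
  have Kw_index: "(Kw *\<^sub>v v') $ i = (K *\<^sub>v v) $ i + c * w $ i" if i: "i < T" for i
  proof -
    have "(Kw *\<^sub>v v') $ i = (\<Sum>j = 0..<Suc k. Kw $$ (i, j) * v' $ j)" using mult_mat_vec_index[OF Kwc v' i] .
    also have "\<dots> = (\<Sum>j = 0..<k. Kw $$ (i, j) * v' $ j) + Kw $$ (i, k) * v' $ k" by simp
    also have "(\<Sum>j = 0..<k. Kw $$ (i, j) * v' $ j) = (\<Sum>j = 0..<k. K $$ (i, j) * v $ j)"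
      using i unfolding Kw_def v_def by (intro sum.cong) auto
    also have "\<dots> = (K *\<^sub>v v) $ i" using mult_mat_vec_index[OF K vc i] by simp
    also have "Kw $$ (i, k) * v' $ k = c * w $ i" using i unfolding Kw_def c_def by simp
    finally show ?thesis .
  qed
  have c0: "c = 0"
  proof (rule ccontr)
    assume cn: "c \<noteq> 0"
    define u :: "'a vec" where "u = vec k (\<lambda>j. - v $ j / c)"
    have uc: "u \<in> carrier_vec k" unfolding u_def by simp
    have "w = K *\<^sub>v u"
    proof (rule eq_vecI)
      show "dim_vec w = dim_vec (K *\<^sub>v u)" using wc K by simp
      fix i assume "i < dim_vec (K *\<^sub>v u)"
      then have i: "i < T" using K by simp
      have "(K *\<^sub>v v) $ i + c * w $ i = 0" using Kw_index[OF i] z i by simp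
      then have wi: "w $ i = - (K *\<^sub>v v) $ i / c" using cn by (simp add: field_simps eq_neg_iff_add_eq_0)
      have "(K *\<^sub>v u) $ i = (\<Sum>j = 0..<k. K $$ (i, j) * (- v $ j / c))"
        using mult_mat_vec_index[OF K uc i] unfolding u_def by simp
      also have "\<dots> = - (\<Sum>j = 0..<k. K $$ (i, j) * v $ j) / c"
        by (simp add: sum_divide_distrib sum_negf[symmetric])
      also have "\<dots> = - (K *\<^sub>v v) $ i / c" using mult_mat_vec_index[OF K vc i] by simp
      finally show "w $ i = (K *\<^sub>v u) $ i" using wi by simp
    qed
    then show False using nw uc by blast
  qed
  have "K *\<^sub>v v = 0\<^sub>v T"
  proof (rule eq_vecI)
    show "dim_vec (K *\<^sub>v v) = dim_vec (0\<^sub>v T)" using K by simp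
    fix i assume "i < dim_vec (0\<^sub>v T)"
    then have i: "i < T" by simp
    show "(K *\<^sub>v v) $ i = 0\<^sub>v T $ i" using Kw_index[OF i] z i c0 by simp
  qed
  then have "v = 0\<^sub>v k" using inj vc by blast
  then show "v' = 0\<^sub>v (Suc k)"
  proof (intro eq_vecI)
    assume v0: "v = 0\<^sub>v k"
    show "dim_vec v' = dim_vec (0\<^sub>v (Suc k))" using v' by simp
    fix j assume "j < dim_vec (0\<^sub>v (Suc k))"
    then have j: "j < Suc k" by simp
    show "v' $ j = 0\<^sub>v (Suc k) $ j"
    proof (cases "j < k")
      case True
      have "v $ j = 0" using v0 True by simp
      then show ?thesis using True j unfolding v_def by simp
    next
      case False then have "j = k" using j by simp
      then show ?thesis using c0 j unfolding c_def by simp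
    qed
  qed
qed

lemma subsp_column_space:
  fixes V :: "'a::field vec set"
  assumes V: "subsp T V"
  shows "\<exists>k K. K \<in> carrier_mat T k \<and> (\<forall>v\<in>carrier_vec k. K *\<^sub>v v = 0\<^sub>v T \<longrightarrow> v = 0\<^sub>v k) \<and>
     V = {K *\<^sub>v v | v. v \<in> carrier_vec k}"
proof -
  note Vd = subspD[OF V]
  define P where "P k \<longleftrightarrow> (\<exists>K. K \<in> carrier_mat T k \<and> (\<forall>v\<in>carrier_vec k. K *\<^sub>v v = 0\<^sub>v T \<longrightarrow> v = 0\<^sub>v k)
     \<and> (\<forall>j<k. col K j \<in> V))" for k
  have P0: "P 0" unfolding P_def
    by (rule exI[of _ "0\<^sub>m T 0 :: 'a mat"]) (auto simp: vec_carrier_0)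
  have P_le: "\<And>k. P k \<Longrightarrow> k \<le> T" unfolding P_def using injective_mat_cols_le_rows by blast
  define k0 where "k0 = (GREATEST k. P k)"
  have Pk0: "P k0" unfolding k0_def using GreatestI_nat[of P 0 T] P0 P_le by blast
  have maxk: "\<And>k. P k \<Longrightarrow> k \<le> k0" unfolding k0_def using Greatest_le_nat[of P _ T] P_le by blast
  obtain K where K: "K \<in> carrier_mat T k0" and inj: "\<forall>v\<in>carrier_vec k0. K *\<^sub>v v = 0\<^sub>v T \<longrightarrow> v = 0\<^sub>v k0"
    and cols: "\<forall>j<k0. col K j \<in> V" using Pk0 unfolding P_def by blast
  show ?thesis
  proof (intro exI conjI)
    show "K \<in> carrier_mat T k0" by fact
    show "\<forall>v\<in>carrier_vec k0. K *\<^sub>v v = 0\<^sub>v T \<longrightarrow> v = 0\<^sub>v k0" by fact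
    show "V = {K *\<^sub>v v | v. v \<in> carrier_vec k0}"
    proof
      show "{K *\<^sub>v v | v. v \<in> carrier_vec k0} \<subseteq> V" using mult_mat_vec_in_subsp[OF V K cols] by blast
      show "V \<subseteq> {K *\<^sub>v v | v. v \<in> carrier_vec k0}"
      proof
        fix w assume w: "w \<in> V"
        then have wc: "w \<in> carrier_vec T" using Vd(1) by blast
        show "w \<in> {K *\<^sub>v v | v. v \<in> carrier_vec k0}"
        proof (rule ccontr)
          assume nw: "w \<notin> {K *\<^sub>v v | v. v \<in> carrier_vec k0}"
          define K' where "K' = mat T (Suc k0) (\<lambda>(i, j). if j < k0 then K $$ (i, j) else w $ i)"
          have K'c: "K' \<in> carrier_mat T (Suc k0)" unfolding K'_def by simp
          have colK': "\<forall>j<Suc k0. col K' j \<in> V"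
          proof (intro allI impI)
            fix j assume j: "j < Suc k0"
            show "col K' j \<in> V"
            proof (cases "j < k0")
              case True
              have "col K' j = col K j" using K True wc unfolding K'_def by (intro eq_vecI) auto
              then show ?thesis using cols True by simp
            next
              case False
              then have "j = k0" using j by simp
              then have "col K' j = w" using K wc unfolding K'_def by (intro eq_vecI) auto
              then show ?thesis using w by simp
            qed
          qed
          have injK': "\<forall>v\<in>carrier_vec (Suc k0). K' *\<^sub>v v = 0\<^sub>v T \<longrightarrow> v = 0\<^sub>v (Suc k0)"
            using append_col_injective[OF K inj wc nw] unfolding K'_def .
          have "P (Suc k0)" unfolding P_def using K'c injK' colK' by blast
          then show False using maxk by fastforce
        qed
      qed
    qed
  qed
qed

definition vsum :: "'a::field vec set \<Rightarrow> 'a vec set \<Rightarrow> 'a vec set" where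
  "vsum A W = {a + w | a w. a \<in> A \<and> w \<in> W}"

definition vext :: "'a::field vec set \<Rightarrow> 'a vec \<Rightarrow> 'a vec set" where
  "vext W e = {w + c \<cdot>\<^sub>v e | w c. w \<in> W}"

lemma vsum_subsp:
  assumes A: "subsp n A" and W: "subsp n W"
  shows "subsp n (vsum A W)"
proof -
  note Ad = subspD[OF A] and Wd = subspD[OF W]
  show ?thesis unfolding subsp_def
  proof (intro conjI ballI allI)
    show "vsum A W \<subseteq> carrier_vec n" unfolding vsum_def using Ad(1) Wd(1) by (auto intro!: add_carrier_vec)
    have "(0\<^sub>v n :: 'a vec) = 0\<^sub>v n + 0\<^sub>v n" by (intro eq_vecI) auto
    then show "0\<^sub>v n \<in> vsum A W" unfolding vsum_def using Ad(2) Wd(2) by blast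
    fix u v assume u: "u \<in> vsum A W" and v: "v \<in> vsum A W"
    then obtain a w a' w' where aw: "u = a + w" "a \<in> A" "w \<in> W" "v = a' + w'" "a' \<in> A" "w' \<in> W"
      unfolding vsum_def by blast
    have c: "a \<in> carrier_vec n" "w \<in> carrier_vec n" "a' \<in> carrier_vec n" "w' \<in> carrier_vec n"
      using aw Ad(1) Wd(1) by auto
    have "u + v = (a + a') + (w + w')" using aw c by (intro eq_vecI) auto
    then show "u + v \<in> vsum A W" unfolding vsum_def using Ad(3) Wd(3) aw by blast
  next
    fix c u assume u: "u \<in> vsum A W"
    then obtain a w where aw: "u = a + w" "a \<in> A" "w \<in> W" unfolding vsum_def by blast
    have cc: "a \<in> carrier_vec n" "w \<in> carrier_vec n" using aw Ad(1) Wd(1) by auto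
    have "c \<cdot>\<^sub>v u = c \<cdot>\<^sub>v a + c \<cdot>\<^sub>v w" using aw cc by (intro eq_vecI) (auto simp: distrib_left)
    then show "c \<cdot>\<^sub>v u \<in> vsum A W" unfolding vsum_def using Ad(4) Wd(4) aw by blast
  qed
qed

lemma vsum_mono: "W \<subseteq> W' \<Longrightarrow> vsum A W \<subseteq> vsum A W'"
  unfolding vsum_def by blast

lemma vext_subsp:
  assumes W: "subsp n W" and e: "e \<in> carrier_vec n"
  shows "subsp n (vext W e)" "W \<subseteq> vext W e" "e \<in> vext W e"
proof -
  note Wd = subspD[OF W]
  show "W \<subseteq> vext W e"
  proof
    fix w assume w: "w \<in> W"
    have "w = w + 0 \<cdot>\<^sub>v e" using w Wd(1) e by (intro eq_vecI) auto
    then show "w \<in> vext W e" unfolding vext_def using w by blast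
  qed
  have "e = 0\<^sub>v n + 1 \<cdot>\<^sub>v e" using e by (intro eq_vecI) auto
  then show "e \<in> vext W e" unfolding vext_def using Wd(2) by blast
  show "subsp n (vext W e)" unfolding subsp_def
  proof (intro conjI ballI allI)
    show "vext W e \<subseteq> carrier_vec n" unfolding vext_def using Wd(1) e by auto
    have "0\<^sub>v n = 0\<^sub>v n + 0 \<cdot>\<^sub>v e" using e by (intro eq_vecI) auto
    then show "0\<^sub>v n \<in> vext W e" unfolding vext_def using Wd(2) by blast
    fix u v assume u: "u \<in> vext W e" and v: "v \<in> vext W e"
    then obtain w c w' c' where aw: "u = w + c \<cdot>\<^sub>v e" "w \<in> W" "v = w' + c' \<cdot>\<^sub>v e" "w' \<in> W"
      unfolding vext_def by blast
    have cc: "w \<in> carrier_vec n" "w' \<in> carrier_vec n" using aw Wd(1) by auto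
    have "u + v = (w + w') + (c + c') \<cdot>\<^sub>v e" using aw cc e by (intro eq_vecI) (auto simp: algebra_simps)
    then show "u + v \<in> vext W e" unfolding vext_def using Wd(3) aw by blast
  next
    fix k u assume u: "u \<in> vext W e"
    then obtain w c where aw: "u = w + c \<cdot>\<^sub>v e" "w \<in> W" unfolding vext_def by blast
    have cc: "w \<in> carrier_vec n" using aw Wd(1) by auto
    have "k \<cdot>\<^sub>v u = k \<cdot>\<^sub>v w + (k * c) \<cdot>\<^sub>v e" using aw cc e by (intro eq_vecI) (auto simp: algebra_simps)
    then show "k \<cdot>\<^sub>v u \<in> vext W e" unfolding vext_def using Wd(4) aw by blast
  qed
qed

lemma vext_disj:
  assumes A: "subsp n A" and W: "subsp n W" and AW: "A \<inter> W = {0\<^sub>v n}" and e: "e \<in> carrier_vec n"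
    and ne: "e \<notin> vsum A W"
  shows "A \<inter> vext W e = {0\<^sub>v n}"
proof
  note Ad = subspD[OF A] and Wd = subspD[OF W]
  show "{0\<^sub>v n} \<subseteq> A \<inter> vext W e" using Ad(2) vext_subsp(2)[OF W e] Wd(2) by auto
  show "A \<inter> vext W e \<subseteq> {0\<^sub>v n}"
  proof
    fix a assume a: "a \<in> A \<inter> vext W e"
    then obtain w c where aw: "a = w + c \<cdot>\<^sub>v e" "w \<in> W" "a \<in> A" unfolding vext_def by blast
    have cc: "w \<in> carrier_vec n" "a \<in> carrier_vec n" using aw Wd(1) Ad(1) by auto
    show "a \<in> {0\<^sub>v n}"
    proof (cases "c = 0")
      case True
      then have "a = w" using aw cc e by (intro eq_vecI) auto
      then show ?thesis using AW aw by auto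
    next
      case False
      have "e = (1 / c) \<cdot>\<^sub>v a + (- (1 / c)) \<cdot>\<^sub>v w" using aw cc e False
        by (intro eq_vecI) (auto simp: field_simps)
      moreover have "(1 / c) \<cdot>\<^sub>v a \<in> A" "(- (1 / c)) \<cdot>\<^sub>v w \<in> W" using Ad(4) Wd(4) aw by auto
      ultimately have "e \<in> vsum A W" unfolding vsum_def by blast
      then show ?thesis using ne by simp
    qed
  qed
qed

lemma subsp_complement:
  fixes A B :: "'a::field vec set"
  assumes A: "subsp n A" and B: "subsp n B" and AB: "A \<inter> B = {0\<^sub>v n}"
  shows "\<exists>W. subsp n W \<and> B \<subseteq> W \<and> A \<inter> W = {0\<^sub>v n} \<and> (\<forall>v\<in>carrier_vec n. \<exists>a\<in>A. \<exists>w\<in>W. v = a + w)"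
proof -
  define f where "f = rec_nat B (\<lambda>i Wi. if unit_vec n i \<in> vsum A Wi then Wi else vext Wi (unit_vec n i))"
  have f0: "f 0 = B" unfolding f_def by simp
  have fS: "f (Suc i) = (if unit_vec n i \<in> vsum A (f i) then f i else vext (f i) (unit_vec n i))" for i
    unfolding f_def by simp
  have inv: "subsp n (f i) \<and> B \<subseteq> f i \<and> A \<inter> f i = {0\<^sub>v n} \<and> (\<forall>j<i. unit_vec n j \<in> vsum A (f i))" for i
  proof (induction i)
    case 0 then show ?case using f0 B AB by simp
  next
    case (Suc i)
    have ec: "unit_vec n i \<in> carrier_vec n" by simp
    show ?case
    proof (cases "unit_vec n i \<in> vsum A (f i)")
      case True
      then show ?thesis using Suc fS[of i] less_Suc_eq by auto
    next
      case False
      note E = vext_subsp[of n "f i" "unit_vec n i", OF _ ec]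
      have s: "subsp n (f (Suc i))" using E(1) Suc False fS[of i] by simp
      have sub: "f i \<subseteq> f (Suc i)" using E(2) Suc False fS[of i] by simp
      have d: "A \<inter> f (Suc i) = {0\<^sub>v n}" using vext_disj[OF A _ _ ec False] Suc fS[of i] False by simp
      have ei: "unit_vec n i \<in> vsum A (f (Suc i))"
      proof -
        have "unit_vec n i \<in> f (Suc i)" using E(3) Suc False fS[of i] by simp
        moreover have "(unit_vec n i :: 'a vec) = 0\<^sub>v n + unit_vec n i" by (intro eq_vecI) auto
        ultimately show ?thesis unfolding vsum_def using subspD(2)[OF A] by blast
      qed
      have "\<forall>j<Suc i. unit_vec n j \<in> vsum A (f (Suc i))"
        using Suc vsum_mono[OF sub, of A] ei less_Suc_eq by auto
      then show ?thesis using s sub d Suc by auto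
    qed
  qed
  define W where "W = f n"
  have Ws: "subsp n W" "B \<subseteq> W" "A \<inter> W = {0\<^sub>v n}" "\<forall>j<n. unit_vec n j \<in> vsum A W"
    using inv[of n] unfolding W_def by auto
  have VS: "subsp n (vsum A W)" using vsum_subsp[OF A Ws(1)] .
  note Vd = subspD[OF VS]
  have all: "v \<in> vsum A W" if v: "v \<in> carrier_vec n" for v
  proof -
    have "j \<le> n \<Longrightarrow> vec n (\<lambda>i. if i < j then v $ i else 0) \<in> vsum A W" for j
    proof (induction j)
      case 0
      have "vec n (\<lambda>i. if i < 0 then v $ i else 0) = 0\<^sub>v n" by (intro eq_vecI) auto
      then show ?case using Vd(2) by simp
    next
      case (Suc j)
      have "vec n (\<lambda>i. if i < Suc j then v $ i else 0) = vec n (\<lambda>i. if i < j then v $ i else 0) + v $ j \<cdot>\<^sub>v unit_vec n j"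
        using Suc.prems by (intro eq_vecI) (auto simp: unit_vec_def less_Suc_eq)
      moreover have "v $ j \<cdot>\<^sub>v unit_vec n j \<in> vsum A W" using Ws(4) Suc.prems Vd(4) by simp
      ultimately show ?case using Suc Vd(3) by simp
    qed
    from this[of n] have "vec n (\<lambda>i. if i < n then v $ i else 0) \<in> vsum A W" by simp
    moreover have "vec n (\<lambda>i. if i < n then v $ i else 0) = v" using v by (intro eq_vecI) auto
    ultimately show ?thesis by simp
  qed
  show ?thesis
    using Ws all unfolding vsum_def by blast
qed

lemma mult_mat_vec_zero: "A \<in> carrier_mat nr nc \<Longrightarrow> A *\<^sub>v 0\<^sub>v nc = (0\<^sub>v nr :: 'a::field vec)"
  by (intro eq_vecI) (auto simp: mult_mat_vec_index)

lemma carrier_vec_neq_zero: "m \<noteq> 0 \<Longrightarrow> carrier_vec m \<noteq> {0\<^sub>v m :: 'a::field vec}"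
proof
  assume m: "m \<noteq> 0" and e: "carrier_vec m = {0\<^sub>v m :: 'a::field vec}"
  have "(unit_vec m 0 :: 'a vec) \<in> carrier_vec m" by simp
  then have "(unit_vec m 0 :: 'a vec) = 0\<^sub>v m" using e by blast
  then have "(unit_vec m 0 :: 'a vec) $ 0 = 0\<^sub>v m $ 0" by simp
  then show False using m by simp
qed

section \<open>Indecomposability and the reflection functor\<close>

definition along_branch ::
  "('v \<Rightarrow> 'v \<Rightarrow> bool) \<Rightarrow> 'v \<Rightarrow> 'v \<Rightarrow> 'k::field vec set \<Rightarrow> bool \<Rightarrow> ('v, 'k) rep \<Rightarrow> 'v \<Rightarrow> 'k vec set" where
  "along_branch adj y x1 V0 inside M a = (if a = y then V0
     else if (a \<in> branch adj y x1) = inside then carrier_vec (dimv M a) else {0\<^sub>v (dimv M a)})"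

context tree begin

lemma nbr_in_branch_iff: "adj y x1 \<Longrightarrow> adj y x \<Longrightarrow> x \<in> branch adj y x1 \<longleftrightarrow> x = x1"
  using branches_disjoint nbr_in_branch by blast

lemma along_branch_compatible:
  fixes M :: "('v, 'k::field) rep"
  assumes bip: "bipartite_orientation adj snk" and wf: "wf_rep adj snk M" and yx1: "adj y x1"
    and V0: "subsp (dimv M y) V0"
    and into: "\<And>x v. snk y \<Longrightarrow> adj x y \<Longrightarrow> v \<in> carrier_vec (dimv M x) \<Longrightarrow> (x = x1) = inside \<Longrightarrow>
        mapv M x y *\<^sub>v v \<in> V0"
    and kills: "\<And>x u. \<not> snk y \<Longrightarrow> adj y x \<Longrightarrow> (x = x1) \<noteq> inside \<Longrightarrow> u \<in> V0 \<Longrightarrow>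
        mapv M y x *\<^sub>v u = 0\<^sub>v (dimv M x)"
    and ba: "adj b a" "snk a" and u: "u \<in> along_branch adj y x1 V0 inside M b"
  shows "mapv M b a *\<^sub>v u \<in> along_branch adj y x1 V0 inside M a"
proof -
  let ?B = "branch adj y x1" and ?V = "along_branch adj y x1 V0 inside M"
  have Mc: "mapv M b a \<in> carrier_mat (dimv M a) (dimv M b)" using wf ba unfolding wf_rep_def by blast
  have V0c: "V0 \<subseteq> carrier_vec (dimv M y)" using subspD(1)[OF V0] .
  have ab: "a \<noteq> b" using ba adj_irrefl by blast
  consider "a = y" | "b = y" | "a \<noteq> y" "b \<noteq> y" by blast
  then show ?thesis
  proof cases
    case 1
    have by': "b \<noteq> y" and yb: "adj y b" and sy: "snk y" using ab ba adj_sym 1 by auto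
    show ?thesis
    proof (cases "(b = x1) = inside")
      case True
      then have "u \<in> carrier_vec (dimv M b)"
        using u by' nbr_in_branch_iff[OF yx1 yb] unfolding along_branch_def by auto
      then show ?thesis using into[OF sy _ _ True] ba 1 unfolding along_branch_def by simp
    next
      case False
      then have "u = 0\<^sub>v (dimv M b)"
        using u by' nbr_in_branch_iff[OF yx1 yb] unfolding along_branch_def by auto
      then show ?thesis using mult_mat_vec_zero[OF Mc] subspD(2)[OF V0] 1 unfolding along_branch_def by simp
    qed
  next
    case 2
    have ay: "a \<noteq> y" and ya: "adj y a" and ny: "\<not> snk y"
      using ab ba 2 bip unfolding bipartite_orientation_def by auto
    have uV: "u \<in> V0" using u 2 unfolding along_branch_def by simp
    show ?thesis
    proof (cases "(a = x1) = inside")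
      case True
      then show ?thesis using mult_mat_vec_carrier[OF Mc] uV V0c ay 2 nbr_in_branch_iff[OF yx1 ya]
        unfolding along_branch_def by auto
    next
      case False
      then show ?thesis using kills[OF ny ya False uV] ay 2 nbr_in_branch_iff[OF yx1 ya]
        unfolding along_branch_def by auto
    qed
  next
    case 3
    have "a \<in> ?B \<longleftrightarrow> b \<in> ?B"
      using branch_step[of a y x1 b] branch_step[of b y x1 a] adj_sym ba 3 by blast
    then show ?thesis using u 3 mult_mat_vec_carrier[OF Mc] mult_mat_vec_zero[OF Mc]
      unfolding along_branch_def by (auto split: if_splits)
  qed
qed

lemma along_branch_complementary:
  fixes M :: "('v, 'k::field) rep"
  assumes U0: "subsp (dimv M y) U0" and W0: "subsp (dimv M y) W0" and UW: "U0 \<inter> W0 = {0\<^sub>v (dimv M y)}"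
    and span: "\<forall>v\<in>carrier_vec (dimv M y). \<exists>u\<in>U0. \<exists>w\<in>W0. v = u + w"
  shows "subsp (dimv M a) (along_branch adj y x1 U0 True M a) \<and>
    subsp (dimv M a) (along_branch adj y x1 W0 False M a) \<and>
    along_branch adj y x1 U0 True M a \<inter> along_branch adj y x1 W0 False M a = {0\<^sub>v (dimv M a)} \<and>
    (\<forall>v\<in>carrier_vec (dimv M a). \<exists>u\<in>along_branch adj y x1 U0 True M a.
       \<exists>w\<in>along_branch adj y x1 W0 False M a. v = u + w)"
proof -
  have plus_zero: "\<forall>v\<in>carrier_vec (dimv M a). \<exists>u\<in>carrier_vec (dimv M a). \<exists>w\<in>{0\<^sub>v (dimv M a)}. v = u + (w :: 'k vec)"
    and zero_plus: "\<forall>v\<in>carrier_vec (dimv M a). \<exists>u\<in>{0\<^sub>v (dimv M a)}. \<exists>w\<in>carrier_vec (dimv M a). v = u + (w :: 'k vec)"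
    by (auto intro!: bexI[of _ "0\<^sub>v (dimv M a)"])
  show ?thesis
    using U0 W0 UW span subsp_carrier subsp_zero plus_zero zero_plus
    unfolding along_branch_def by auto
qed

lemma branch_split_decomposable:
  fixes M :: "('v, 'k::field) rep"
  assumes bip: "bipartite_orientation adj snk" and wf: "wf_rep adj snk M"
    and yx: "adj y x1"
    and U0: "subsp (dimv M y) U0" and W0: "subsp (dimv M y) W0" and UW: "U0 \<inter> W0 = {0\<^sub>v (dimv M y)}"
    and span: "\<forall>v\<in>carrier_vec (dimv M y). \<exists>u\<in>U0. \<exists>w\<in>W0. v = u + w"
    and inA: "\<And>x v. snk y \<Longrightarrow> adj x y \<Longrightarrow> v \<in> carrier_vec (dimv M x) \<Longrightarrow>
        mapv M x y *\<^sub>v v \<in> (if x = x1 then U0 else W0)"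
    and outA: "\<And>x. \<not> snk y \<Longrightarrow> adj y x \<Longrightarrow>
        (x \<noteq> x1 \<longrightarrow> (\<forall>u\<in>U0. mapv M y x *\<^sub>v u = 0\<^sub>v (dimv M x))) \<and>
        (x = x1 \<longrightarrow> (\<forall>w\<in>W0. mapv M y x *\<^sub>v w = 0\<^sub>v (dimv M x)))"
    and a0: "a0 \<in> branch adj y x1" "dimv M a0 \<noteq> 0"
    and z: "z \<notin> branch adj y x1" "z \<noteq> y" "dimv M z \<noteq> 0"
  shows "\<not> indecomposable adj snk M"
proof -
  define U where "U = along_branch adj y x1 U0 True M"
  define W where "W = along_branch adj y x1 W0 False M"
  have "\<forall>a. subsp (dimv M a) (U a) \<and> subsp (dimv M a) (W a) \<and> U a \<inter> W a = {0\<^sub>v (dimv M a)} \<and>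
      (\<forall>v\<in>carrier_vec (dimv M a). \<exists>u\<in>U a. \<exists>w\<in>W a. v = u + w)"
    using along_branch_complementary[OF U0 W0 UW span] unfolding U_def W_def by blast
  moreover have "\<forall>a b. adj b a \<and> snk a \<longrightarrow>
      (\<forall>u\<in>U b. mapv M b a *\<^sub>v u \<in> U a) \<and> (\<forall>w\<in>W b. mapv M b a *\<^sub>v w \<in> W a)"
  proof (intro allI impI conjI ballI)
    fix a b u assume "adj b a \<and> snk a" "u \<in> U b"
    then show "mapv M b a *\<^sub>v u \<in> U a"
      using along_branch_compatible[OF bip wf yx U0, of True] inA outA unfolding U_def by fastforce
  next
    fix a b w assume "adj b a \<and> snk a" "w \<in> W b"
    then show "mapv M b a *\<^sub>v w \<in> W a"
      using along_branch_compatible[OF bip wf yx W0, of False] inA outA unfolding W_def by fastforce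
  qed
  moreover have "a0 \<noteq> y" using a0 root_notin_branch by auto
  then have "U a0 \<noteq> {0\<^sub>v (dimv M a0)}"
    using a0 carrier_vec_neq_zero[of "dimv M a0"] unfolding U_def along_branch_def by auto
  moreover have "W z \<noteq> {0\<^sub>v (dimv M z)}"
    using z carrier_vec_neq_zero[of "dimv M z"] unfolding W_def along_branch_def by auto
  ultimately show ?thesis unfolding indecomposable_def by blast
qed

end

definition sum_range :: "'v set \<Rightarrow> ('v \<Rightarrow> 'k::field mat) \<Rightarrow> ('v \<Rightarrow> nat) \<Rightarrow> nat \<Rightarrow> 'k vec set" where
  "sum_range X F dd m = {vec m (\<lambda>i. \<Sum>x\<in>X. (F x *\<^sub>v u x) $ i) | u. \<forall>x\<in>X. u x \<in> carrier_vec (dd x)}"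

lemma sum_range_subsp:
  assumes F: "\<And>x. x \<in> X \<Longrightarrow> F x \<in> carrier_mat m (dd x)"
  shows "subsp m (sum_range X F dd m)"
  unfolding subsp_def
proof (intro conjI ballI allI)
  show "sum_range X F dd m \<subseteq> carrier_vec m" unfolding sum_range_def by auto
  have z: "\<And>x. x \<in> X \<Longrightarrow> F x *\<^sub>v 0\<^sub>v (dd x) = 0\<^sub>v m" using F mult_mat_vec_zero by blast
  have "vec m (\<lambda>i. \<Sum>x\<in>X. (F x *\<^sub>v 0\<^sub>v (dd x)) $ i) = 0\<^sub>v m"
    using z by (intro eq_vecI) (auto intro!: sum.neutral)
  then show "0\<^sub>v m \<in> sum_range X F dd m" unfolding sum_range_def by (intro CollectI exI[of _ "\<lambda>x. 0\<^sub>v (dd x)"]) auto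
next
  fix a b assume "a \<in> sum_range X F dd m" "b \<in> sum_range X F dd m"
  then obtain u u' where u: "a = vec m (\<lambda>i. \<Sum>x\<in>X. (F x *\<^sub>v u x) $ i)" "\<forall>x\<in>X. u x \<in> carrier_vec (dd x)"
    and u': "b = vec m (\<lambda>i. \<Sum>x\<in>X. (F x *\<^sub>v u' x) $ i)" "\<forall>x\<in>X. u' x \<in> carrier_vec (dd x)"
    unfolding sum_range_def by blast
  have "a + b = vec m (\<lambda>i. \<Sum>x\<in>X. (F x *\<^sub>v (u x + u' x)) $ i)"
  proof (rule eq_vecI)
    show "dim_vec (a + b) = dim_vec (vec m (\<lambda>i. \<Sum>x\<in>X. (F x *\<^sub>v (u x + u' x)) $ i))" using u u' by simp
    fix i assume "i < dim_vec (vec m (\<lambda>i. \<Sum>x\<in>X. (F x *\<^sub>v (u x + u' x)) $ i))"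
    then have i: "i < m" by simp
    have "(\<Sum>x\<in>X. (F x *\<^sub>v (u x + u' x)) $ i) = (\<Sum>x\<in>X. (F x *\<^sub>v u x) $ i + (F x *\<^sub>v u' x) $ i)"
    proof (rule sum.cong)
      fix x assume x: "x \<in> X"
      have "F x *\<^sub>v (u x + u' x) = F x *\<^sub>v u x + F x *\<^sub>v u' x"
        using mult_add_distrib_mat_vec[OF F[OF x]] u(2) u'(2) x by blast
      then show "(F x *\<^sub>v (u x + u' x)) $ i = (F x *\<^sub>v u x) $ i + (F x *\<^sub>v u' x) $ i"
        using F[OF x] i by simp
    qed simp
    then show "(a + b) $ i = vec m (\<lambda>i. \<Sum>x\<in>X. (F x *\<^sub>v (u x + u' x)) $ i) $ i"
      using u u' i by (simp add: sum.distrib)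
  qed
  moreover have "\<forall>x\<in>X. u x + u' x \<in> carrier_vec (dd x)" using u u' by auto
  ultimately show "a + b \<in> sum_range X F dd m" unfolding sum_range_def
    by (intro CollectI exI[of _ "\<lambda>x. u x + u' x"] conjI) auto
next
  fix c a assume "a \<in> sum_range X F dd m"
  then obtain u where u: "a = vec m (\<lambda>i. \<Sum>x\<in>X. (F x *\<^sub>v u x) $ i)" "\<forall>x\<in>X. u x \<in> carrier_vec (dd x)"
    unfolding sum_range_def by blast
  have "c \<cdot>\<^sub>v a = vec m (\<lambda>i. \<Sum>x\<in>X. (F x *\<^sub>v (c \<cdot>\<^sub>v u x)) $ i)"
  proof (rule eq_vecI)
    show "dim_vec (c \<cdot>\<^sub>v a) = dim_vec (vec m (\<lambda>i. \<Sum>x\<in>X. (F x *\<^sub>v (c \<cdot>\<^sub>v u x)) $ i))" using u by simp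
    fix i assume "i < dim_vec (vec m (\<lambda>i. \<Sum>x\<in>X. (F x *\<^sub>v (c \<cdot>\<^sub>v u x)) $ i))"
    then have i: "i < m" by simp
    have "(\<Sum>x\<in>X. (F x *\<^sub>v (c \<cdot>\<^sub>v u x)) $ i) = (\<Sum>x\<in>X. c * (F x *\<^sub>v u x) $ i)"
    proof (rule sum.cong)
      fix x assume x: "x \<in> X"
      have "F x *\<^sub>v (c \<cdot>\<^sub>v u x) = c \<cdot>\<^sub>v (F x *\<^sub>v u x)"
        using mult_mat_vec[OF F[OF x]] u(2) x by blast
      then show "(F x *\<^sub>v (c \<cdot>\<^sub>v u x)) $ i = c * (F x *\<^sub>v u x) $ i"
        using F[OF x] i by simp
    qed simp
    then show "(c \<cdot>\<^sub>v a) $ i = vec m (\<lambda>i. \<Sum>x\<in>X. (F x *\<^sub>v (c \<cdot>\<^sub>v u x)) $ i) $ i"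
      using u i by (simp add: sum_distrib_left)
  qed
  moreover have "\<forall>x\<in>X. c \<cdot>\<^sub>v u x \<in> carrier_vec (dd x)" using u by auto
  ultimately show "c \<cdot>\<^sub>v a \<in> sum_range X F dd m" unfolding sum_range_def
    by (intro CollectI exI[of _ "\<lambda>x. c \<cdot>\<^sub>v u x"] conjI) auto
qed

lemma sum_range_singleton:
  assumes F: "F x1 \<in> carrier_mat m (dd x1)"
  shows "sum_range {x1} F dd m = {F x1 *\<^sub>v v | v. v \<in> carrier_vec (dd x1)}"
proof -
  have eq: "vec m (\<lambda>i. \<Sum>x\<in>{x1}. (F x *\<^sub>v u x) $ i) = F x1 *\<^sub>v u x1" for u
    using F by (intro eq_vecI) auto
  show ?thesis unfolding sum_range_def
  proof (rule equalityI; rule subsetI)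
    fix a assume "a \<in> {vec m (\<lambda>i. \<Sum>x\<in>{x1}. (F x *\<^sub>v u x) $ i) |u. \<forall>x\<in>{x1}. u x \<in> carrier_vec (dd x)}"
    then obtain u where "a = vec m (\<lambda>i. \<Sum>x\<in>{x1}. (F x *\<^sub>v u x) $ i)" "u x1 \<in> carrier_vec (dd x1)" by blast
    then show "a \<in> {F x1 *\<^sub>v v |v. v \<in> carrier_vec (dd x1)}" using eq[of u] by blast
  next
    fix a assume "a \<in> {F x1 *\<^sub>v v |v. v \<in> carrier_vec (dd x1)}"
    then obtain v where v: "a = F x1 *\<^sub>v v" "v \<in> carrier_vec (dd x1)" by blast
    show "a \<in> {vec m (\<lambda>i. \<Sum>x\<in>{x1}. (F x *\<^sub>v u x) $ i) |u. \<forall>x\<in>{x1}. u x \<in> carrier_vec (dd x)}"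
      using v eq[of "\<lambda>_. v"] by (intro CollectI exI[of _ "\<lambda>_. v"]) auto
  qed
qed

lemma mult_mat_vec_in_sum_range:
  assumes fin: "finite X" and F: "\<And>z. z \<in> X \<Longrightarrow> F z \<in> carrier_mat m (dd z)"
    and x: "x \<in> X" and v: "v \<in> carrier_vec (dd x)"
  shows "F x *\<^sub>v v \<in> sum_range X F dd m"
proof -
  define u where "u z = (if z = x then v else 0\<^sub>v (dd z))" for z
  have uc: "\<forall>z\<in>X. u z \<in> carrier_vec (dd z)" using v unfolding u_def by auto
  have "vec m (\<lambda>i. \<Sum>z\<in>X. (F z *\<^sub>v u z) $ i) = F x *\<^sub>v v"
  proof (rule eq_vecI)
    show "dim_vec (vec m (\<lambda>i. \<Sum>z\<in>X. (F z *\<^sub>v u z) $ i)) = dim_vec (F x *\<^sub>v v)"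
      using F[OF x] by simp
    fix i assume "i < dim_vec (F x *\<^sub>v v)"
    then have i: "i < m" using F[OF x] by simp
    have "(\<Sum>z\<in>X. (F z *\<^sub>v u z) $ i) = (\<Sum>z\<in>X. if z = x then (F x *\<^sub>v v) $ i else 0)"
    proof (rule sum.cong)
      fix z assume z: "z \<in> X"
      show "(F z *\<^sub>v u z) $ i = (if z = x then (F x *\<^sub>v v) $ i else 0)"
        using mult_mat_vec_zero[OF F[OF z]] i unfolding u_def by auto
    qed simp
    also have "\<dots> = (F x *\<^sub>v v) $ i" using x fin by simp
    finally show "vec m (\<lambda>i. \<Sum>z\<in>X. (F z *\<^sub>v u z) $ i) $ i = (F x *\<^sub>v v) $ i" using i by simp
  qed
  then show ?thesis unfolding sum_range_def using uc by (intro CollectI exI[of _ u]) auto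
qed

context tree begin

lemma zero_vertex_separates:
  fixes M :: "('v, 'k::field) rep"
  assumes bip: "bipartite_orientation adj snk" and wf: "wf_rep adj snk M"
    and dy: "dimv M y = 0" and yx1: "adj y x1" and yx2: "adj y x2" and ne: "x1 \<noteq> x2"
    and a0: "a0 \<in> branch adj y x1" "dimv M a0 \<noteq> 0" and z: "z \<in> branch adj y x2" "dimv M z \<noteq> 0"
  shows "\<not> indecomposable adj snk M"
proof -
  have span: "\<forall>v\<in>carrier_vec (dimv M y). \<exists>u\<in>{0\<^sub>v (dimv M y)}. \<exists>w\<in>{0\<^sub>v (dimv M y)}. v = u + w"
    using dy vec_carrier_0 by auto
  have inA: "mapv M x y *\<^sub>v v \<in> (if x = x1 then {0\<^sub>v (dimv M y)} else {0\<^sub>v (dimv M y)})"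
    if "snk y" "adj x y" "v \<in> carrier_vec (dimv M x)" for x v
  proof -
    have "mapv M x y \<in> carrier_mat (dimv M y) (dimv M x)" using wf that unfolding wf_rep_def by blast
    then have "mapv M x y *\<^sub>v v \<in> carrier_vec 0" using that dy mult_mat_vec_carrier by metis
    then show ?thesis using vec_carrier_0 dy by simp
  qed
  have outA: "(x \<noteq> x1 \<longrightarrow> (\<forall>u\<in>{0\<^sub>v (dimv M y)}. mapv M y x *\<^sub>v u = 0\<^sub>v (dimv M x))) \<and>
      (x = x1 \<longrightarrow> (\<forall>w\<in>{0\<^sub>v (dimv M y)}. mapv M y x *\<^sub>v w = 0\<^sub>v (dimv M x)))"
    if "\<not> snk y" "adj y x" for x
  proof -
    have "snk x" using bip that unfolding bipartite_orientation_def by blast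
    then have "mapv M y x \<in> carrier_mat (dimv M x) (dimv M y)" using wf that unfolding wf_rep_def by blast
    then show ?thesis using mult_mat_vec_zero by blast
  qed
  have "z \<notin> branch adj y x1" using branches_disjoint[OF yx1 yx2 ne] z by blast
  moreover have "z \<noteq> y" using z root_notin_branch by blast
  ultimately show ?thesis
    using branch_split_decomposable[OF bip wf yx1 subsp_zero subsp_zero _ span inA outA a0 _ _ z(2)] by simp
qed

lemma supp_convex:
  fixes M :: "('v, 'k::field) rep"
  assumes bip: "bipartite_orientation adj snk" and wf: "wf_rep adj snk M"
    and ind: "indecomposable adj snk M"
  shows "convex adj (supp M)"
  unfolding convex_def
proof (intro allI impI subsetI)
  fix q x assume qq: "is_path adj q \<and> hd q \<in> supp M \<and> last q \<in> supp M" and x: "x \<in> set q"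
  have q: "is_path adj q" "hd q \<in> supp M" "last q \<in> supp M" using qq by auto
  have qne: "q \<noteq> []" using is_pathD(1)[OF q(1)] .
  show "x \<in> supp M"
  proof (rule ccontr)
    assume xn: "x \<notin> supp M"
    obtain t where t: "t < length q" "q ! t = x" using x by (auto simp: in_set_conv_nth)
    have t0: "t \<noteq> 0" using q(2) xn t hd_conv_nth[OF qne] by (metis)
    have tl: "Suc t < length q"
    proof (rule ccontr)
      assume "\<not> Suc t < length q"
      then have "t = length q - 1" using t by simp
      then have "q ! t = last q" using qne by (simp add: last_conv_nth)
      then show False using q(3) xn t by simp
    qed
    \<comment> \<open>the two neighbours of x on q lead to the two (nonzero) ends of q\<close>
    let ?R = "rev (take (Suc t) q)" and ?R2 = "drop t q"
    have Rp: "is_path adj ?R" using path_rev_tree[OF path_take[OF q(1)]] by simp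
    have R0: "?R ! 0 = x" "?R ! 1 = q ! (t - 1)" "?R ! t = q ! 0" using t t0 by (auto simp: rev_nth)
    have R2p: "is_path adj ?R2" using path_drop[OF q(1) t(1)] .
    have R20: "?R2 ! 0 = x" "?R2 ! 1 = q ! (t + 1)" "?R2 ! (length q - 1 - t) = last q"
      using t tl qne by (auto simp: last_conv_nth)
    have "\<not> indecomposable adj snk M"
    proof (rule zero_vertex_separates[OF bip wf])
      show "dimv M x = 0" using xn unfolding supp_def by simp
      show "adj x (q ! (t - 1))" using is_pathD(2)[OF Rp, of 0] R0 t0 t by simp
      show "adj x (q ! (t + 1))" using is_pathD(2)[OF R2p, of 0] R20 tl by simp
      show "q ! (t - 1) \<noteq> q ! (t + 1)" using is_pathD(3)[OF q(1), of "t - 1"] t0 tl by simp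
      show "q ! 0 \<in> branch adj x (q ! (t - 1))" using path_in_branch[OF Rp, of t] t0 t R0 by simp
      show "dimv M (q ! 0) \<noteq> 0" using q(2) hd_conv_nth[OF qne] unfolding supp_def by simp
      show "last q \<in> branch adj x (q ! (t + 1))"
        using path_in_branch[OF R2p, of "length q - 1 - t"] tl R20 by simp
      show "dimv M (last q) \<noteq> 0" using q(3) unfolding supp_def by simp
    qed
    then show False using ind by simp
  qed
qed

lemma reflection_dim_source: "is_reflection adj snk M N \<Longrightarrow> \<not> snk a \<Longrightarrow> dimv N a = dimv M a"
  unfolding is_reflection_def by blast

lemma reflection_map_carrier:
  assumes R: "is_reflection adj snk M N" and bip: "bipartite_orientation adj snk"
    and y: "snk y" and yx: "adj y x"
  shows "mapv N y x \<in> carrier_mat (dimv M x) (dimv N y)"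
proof -
  have nx: "\<not> snk x" using bip y yx unfolding bipartite_orientation_def by blast
  have "wf_rep adj (\<lambda>a. \<not> snk a) N" using R unfolding is_reflection_def by blast
  then have "mapv N y x \<in> carrier_mat (dimv N x) (dimv N y)" using yx nx unfolding wf_rep_def by blast
  then show ?thesis using reflection_dim_source[OF R nx] by simp
qed

lemma reflection_exact:
  assumes R: "is_reflection adj snk M N" and y: "snk y"
    and u: "\<forall>x. adj y x \<longrightarrow> u x \<in> carrier_vec (dimv M x)"
  shows "(\<forall>i < dimv M y. (\<Sum>x\<in>{x. adj y x}. (mapv M x y *\<^sub>v u x) $ i) = 0) \<longleftrightarrow>
         (\<exists>v\<in>carrier_vec (dimv N y). \<forall>x. adj y x \<longrightarrow> u x = mapv N y x *\<^sub>v v)"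
  using R y u unfolding is_reflection_def by blast

lemma reflection_zero_kernel:
  fixes M :: "('v, 'k::field) rep"
  assumes R: "is_reflection adj snk M N" and bip: "bipartite_orientation adj snk" and y: "snk y"
    and N0: "dimv N y = 0"
    and u: "\<forall>x. adj y x \<longrightarrow> u x \<in> carrier_vec (dimv M x)"
    and s: "\<forall>i < dimv M y. (\<Sum>x\<in>{x. adj y x}. (mapv M x y *\<^sub>v u x) $ i) = 0"
  shows "\<forall>x. adj y x \<longrightarrow> u x = 0\<^sub>v (dimv M x)"
proof -
  obtain v where v: "v \<in> carrier_vec (dimv N y)" "\<forall>x. adj y x \<longrightarrow> u x = mapv N y x *\<^sub>v v"
    using reflection_exact[OF R y u] s by blast
  have v0: "v = 0\<^sub>v (dimv N y)" using v(1) N0 vec_carrier_0 by simp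
  show ?thesis
  proof (intro allI impI)
    fix x assume x: "adj y x"
    show "u x = 0\<^sub>v (dimv M x)" using v(2) x v0 mult_mat_vec_zero[OF reflection_map_carrier[OF R bip y x]] by simp
  qed
qed

lemma reflection_supp_next_to_supp:
  fixes M :: "('v, 'k::field) rep"
  assumes R: "is_reflection adj snk M N" and bip: "bipartite_orientation adj snk" and y: "snk y"
    and My: "dimv M y = 0" and yx: "adj y x" and Mx: "dimv M x \<noteq> 0"
  shows "dimv N y \<noteq> 0"
proof
  assume N0: "dimv N y = 0"
  define u :: "'v \<Rightarrow> 'k vec" where "u z = (if z = x then unit_vec (dimv M x) 0 else 0\<^sub>v (dimv M z))" for z
  have uc: "\<forall>z. adj y z \<longrightarrow> u z \<in> carrier_vec (dimv M z)" unfolding u_def by auto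
  have "\<forall>z. adj y z \<longrightarrow> u z = 0\<^sub>v (dimv M z)" using reflection_zero_kernel[OF R bip y N0 uc] My by simp
  then have "u x = 0\<^sub>v (dimv M x)" using yx by blast
  then have "u x $ 0 = 0\<^sub>v (dimv M x) $ 0" by simp
  then show False using Mx unfolding u_def by simp
qed

lemma reflection_zero_images_disjoint:
  fixes M :: "('v, 'k::field) rep"
  assumes R: "is_reflection adj snk M N" and bip: "bipartite_orientation adj snk" and wf: "wf_rep adj snk M"
    and fin: "finite {x. adj y x}" and y: "snk y" and yx1: "adj y x1" and N0: "dimv N y = 0"
  defines "F \<equiv> \<lambda>x. mapv M x y" and "m \<equiv> dimv M y"
  shows "sum_range {x1} F (dimv M) m \<inter> sum_range ({x. adj y x} - {x1}) F (dimv M) m = {0\<^sub>v m}"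
proof -
  define Nb where "Nb = {x. adj y x}"
  have F: "\<And>x. x \<in> Nb \<Longrightarrow> F x \<in> carrier_mat m (dimv M x)"
    using wf y adj_sym unfolding wf_rep_def F_def Nb_def m_def by blast
  have x1N: "x1 \<in> Nb" using yx1 unfolding Nb_def by simp
  define A where "A = sum_range {x1} F (dimv M) m"
  define B where "B = sum_range (Nb - {x1}) F (dimv M) m"
  have As: "subsp m A" unfolding A_def using sum_range_subsp[of "{x1}" F m "dimv M"] F x1N by blast
  have Bs: "subsp m B" unfolding B_def using sum_range_subsp[of "Nb - {x1}" F m "dimv M"] F by blast
  have Aeq: "A = {F x1 *\<^sub>v v | v. v \<in> carrier_vec (dimv M x1)}"
    unfolding A_def using sum_range_singleton[of F x1 m "dimv M", OF F[OF x1N]] .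
  have "A \<inter> B = {0\<^sub>v m}"
  proof
    show "{0\<^sub>v m} \<subseteq> A \<inter> B" using subspD(2)[OF As] subspD(2)[OF Bs] by blast
    show "A \<inter> B \<subseteq> {0\<^sub>v m}"
    proof
      fix a assume a: "a \<in> A \<inter> B"
      then obtain v where v: "v \<in> carrier_vec (dimv M x1)" "a = F x1 *\<^sub>v v" using Aeq by blast
      obtain u where u: "a = vec m (\<lambda>i. \<Sum>x\<in>Nb - {x1}. (F x *\<^sub>v u x) $ i)" "\<forall>x\<in>Nb - {x1}. u x \<in> carrier_vec (dimv M x)"
        using a unfolding B_def sum_range_def by blast
      define u' where "u' x = (if x = x1 then v else (-1) \<cdot>\<^sub>v u x)" for x
      have u'c: "\<forall>x. adj y x \<longrightarrow> u' x \<in> carrier_vec (dimv M x)"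
        using v u(2) unfolding u'_def Nb_def by auto
      have s: "\<forall>i < dimv M y. (\<Sum>x\<in>{x. adj y x}. (mapv M x y *\<^sub>v u' x) $ i) = 0"
      proof (intro allI impI)
        fix i assume "i < dimv M y"
        then have i: "i < m" unfolding m_def .
        have "(\<Sum>x\<in>{x. adj y x}. (mapv M x y *\<^sub>v u' x) $ i) = (\<Sum>x\<in>Nb. (F x *\<^sub>v u' x) $ i)"
          unfolding F_def Nb_def by simp
        also have "\<dots> = (F x1 *\<^sub>v u' x1) $ i + (\<Sum>x\<in>Nb - {x1}. (F x *\<^sub>v u' x) $ i)"
          using fin x1N unfolding Nb_def by (simp add: sum.remove)
        also have "(\<Sum>x\<in>Nb - {x1}. (F x *\<^sub>v u' x) $ i) = (\<Sum>x\<in>Nb - {x1}. - (F x *\<^sub>v u x) $ i)"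
        proof (rule sum.cong)
          fix x assume x: "x \<in> Nb - {x1}"
          have "F x *\<^sub>v ((-1) \<cdot>\<^sub>v u x) = (-1) \<cdot>\<^sub>v (F x *\<^sub>v u x)"
            using mult_mat_vec[OF F[of x]] u(2) x by blast
          then show "(F x *\<^sub>v u' x) $ i = - (F x *\<^sub>v u x) $ i" using x F[of x] i unfolding u'_def by simp
        qed simp
        also have "\<dots> = - a $ i" using u(1) i by (simp add: sum_negf)
        also have "(F x1 *\<^sub>v u' x1) $ i = a $ i" using v unfolding u'_def by simp
        finally show "(\<Sum>x\<in>{x. adj y x}. (mapv M x y *\<^sub>v u' x) $ i) = 0" by simp
      qed
      have "u' x1 = 0\<^sub>v (dimv M x1)" using reflection_zero_kernel[OF R bip y N0 u'c s] yx1 by blast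
      then have "v = 0\<^sub>v (dimv M x1)" unfolding u'_def by simp
      then have "a = 0\<^sub>v m" using v mult_mat_vec_zero[OF F[OF x1N]] by simp
      then show "a \<in> {0\<^sub>v m}" by simp
    qed
  qed
  then show ?thesis unfolding A_def B_def Nb_def .
qed

lemma reflection_supp_between_supp:
  fixes M :: "('v, 'k::field) rep"
  assumes R: "is_reflection adj snk M N" and bip: "bipartite_orientation adj snk" and wf: "wf_rep adj snk M"
    and ind: "indecomposable adj snk M" and fin: "finite {x. adj y x}"
    and y: "snk y" and yx1: "adj y x1" and yx2: "adj y x2" and ne: "x1 \<noteq> x2"
    and M1: "dimv M x1 \<noteq> 0" and M2: "dimv M x2 \<noteq> 0"
  shows "dimv N y \<noteq> 0"
proof
  assume N0: "dimv N y = 0"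
  define m where "m = dimv M y"
  define Nb where "Nb = {x. adj y x}"
  define F where "F x = mapv M x y" for x
  have F: "\<And>x. x \<in> Nb \<Longrightarrow> F x \<in> carrier_mat m (dimv M x)"
    using wf y adj_sym unfolding wf_rep_def F_def Nb_def m_def by blast
  have x1N: "x1 \<in> Nb" using yx1 unfolding Nb_def by simp
  define A where "A = sum_range {x1} F (dimv M) m"
  define B where "B = sum_range (Nb - {x1}) F (dimv M) m"
  have As: "subsp m A" unfolding A_def using sum_range_subsp[of "{x1}" F m "dimv M"] F x1N by blast
  have Bs: "subsp m B" unfolding B_def using sum_range_subsp[of "Nb - {x1}" F m "dimv M"] F by blast
  have Aeq: "A = {F x1 *\<^sub>v v | v. v \<in> carrier_vec (dimv M x1)}"
    unfolding A_def using sum_range_singleton[of F x1 m "dimv M", OF F[OF x1N]] .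
  have AB: "A \<inter> B = {0\<^sub>v m}"
    using reflection_zero_images_disjoint[OF R bip wf fin y yx1 N0]
    unfolding A_def B_def F_def Nb_def m_def .
  \<comment> \<open>a complement W of A containing B splits M along the branch through x1\<close>
  obtain W where W: "subsp m W" "B \<subseteq> W" "A \<inter> W = {0\<^sub>v m}" "\<forall>v\<in>carrier_vec m. \<exists>a\<in>A. \<exists>w\<in>W. v = a + w"
    using subsp_complement[OF As Bs AB] by blast
  have inA: "mapv M x y *\<^sub>v v \<in> (if x = x1 then A else W)"
    if "snk y" "adj x y" "v \<in> carrier_vec (dimv M x)" for x v
  proof (cases "x = x1")
    case True
    then show ?thesis using Aeq that unfolding F_def by auto
  next
    case False
    have xN: "x \<in> Nb - {x1}" using that adj_sym False unfolding Nb_def by blast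
    have "F x *\<^sub>v v \<in> B"
      using mult_mat_vec_in_sum_range[of "Nb - {x1}" F m "dimv M" x v] F fin xN that(3)
      unfolding B_def Nb_def by blast
    then show ?thesis using W(2) False unfolding F_def by auto
  qed
  have outA: "(x \<noteq> x1 \<longrightarrow> (\<forall>u\<in>A. mapv M y x *\<^sub>v u = 0\<^sub>v (dimv M x))) \<and>
        (x = x1 \<longrightarrow> (\<forall>w\<in>W. mapv M y x *\<^sub>v w = 0\<^sub>v (dimv M x)))" if "\<not> snk y" "adj y x" for x
    using that y by blast
  have a0: "x1 \<in> branch adj y x1" using nbr_in_branch[OF yx1] .
  have z1: "x2 \<notin> branch adj y x1" using branches_disjoint[OF yx1 yx2 ne] nbr_in_branch[OF yx2] by blast
  have z2: "x2 \<noteq> y" using yx2 adj_irrefl by blast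
  have "\<not> indecomposable adj snk M"
    using branch_split_decomposable[OF bip wf yx1 As[unfolded m_def] W(1)[unfolded m_def] W(3)[unfolded m_def] W(4)[unfolded m_def]
      inA outA a0 M1 z1 z2 M2] .
  then show False using ind by simp
qed

end

lemma block_embedding:
  fixes dd :: "'v \<Rightarrow> nat"
  assumes fin: "finite X"
  obtains B :: "'v \<Rightarrow> 'k::field mat" and T :: nat and E :: "'k vec set"
  where "\<And>x. x \<in> X \<Longrightarrow> B x \<in> carrier_mat (dd x) T" "subsp T E"
    "\<And>u. (\<forall>x\<in>X. u x \<in> carrier_vec (dd x)) \<Longrightarrow> \<exists>c\<in>E. \<forall>x\<in>X. B x *\<^sub>v c = u x"
    "\<And>c. c \<in> E \<Longrightarrow> \<forall>x\<in>X. B x *\<^sub>v c = 0\<^sub>v (dd x) \<Longrightarrow> c = 0\<^sub>v T"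
proof -
  \<comment> \<open>block x occupies the coordinates h x * D + l, l < dd x, of k^(card X * D); the rest is padding\<close>
  obtain h where h: "bij_betw h X {0..<card X}" using ex_bij_betw_finite_nat[OF fin] by blast
  define g where "g = inv_into X h"
  have hX: "\<And>x. x \<in> X \<Longrightarrow> h x < card X" using h unfolding bij_betw_def by auto
  have gh: "\<And>x. x \<in> X \<Longrightarrow> g (h x) = x" using h unfolding g_def bij_betw_def by (simp add: inv_into_f_f)
  have gX: "\<And>j. j < card X \<Longrightarrow> g j \<in> X" using h unfolding g_def bij_betw_def
    by (metis atLeastLessThan_iff inv_into_into zero_le)
  have hg: "\<And>j. j < card X \<Longrightarrow> h (g j) = j" using h unfolding g_def bij_betw_def
    by (simp add: f_inv_into_f)
  define D where "D = Suc (\<Sum>x\<in>X. dd x)"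
  have ddD: "\<And>x. x \<in> X \<Longrightarrow> dd x < D" unfolding D_def using fin by (simp add: le_imp_less_Suc member_le_sum)
  define T where "T = card X * D"
  have posT: "h x * D + l < T" if x: "x \<in> X" and l: "l < dd x" for x l
  proof -
    have "h x * D + l < Suc (h x) * D" using l ddD[OF x] by simp
    also have "\<dots> \<le> card X * D" using hX[OF x] by (intro mult_right_mono) auto
    finally show ?thesis unfolding T_def .
  qed
  have dm: "(h x * D + l) div D = h x" "(h x * D + l) mod D = l" if x: "x \<in> X" and l: "l < dd x" for x l
    using ddD[OF x] l by auto
  have tdec: "t div D < card X" "t = t div D * D + t mod D" if t: "t < T" for t
    using t unfolding T_def by (auto simp: less_mult_imp_div_less)
  define B :: "'v \<Rightarrow> 'k mat" where "B x = mat (dd x) T (\<lambda>(l, t). if t = h x * D + l then 1 else 0)" for x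
  define E :: "'k vec set" where "E = {c \<in> carrier_vec T. \<forall>t<T. dd (g (t div D)) \<le> t mod D \<longrightarrow> c $ t = 0}"
  have B: "B x \<in> carrier_mat (dd x) T" for x unfolding B_def by simp
  have Bc: "B x *\<^sub>v c = vec (dd x) (\<lambda>l. c $ (h x * D + l))" if x: "x \<in> X" and c: "c \<in> carrier_vec T" for x c
  proof (rule eq_vecI)
    fix l assume "l < dim_vec (vec (dd x) (\<lambda>l. c $ (h x * D + l)))"
    then have l: "l < dd x" by simp
    have "(B x *\<^sub>v c) $ l = (\<Sum>t = 0..<T. (if t = h x * D + l then 1 else 0) * c $ t)"
      using mult_mat_vec_index[OF B c] l unfolding B_def by simp
    also have "\<dots> = c $ (h x * D + l)" using posT[OF x l] by (simp add: if_distrib[of "\<lambda>a. a * _"] cong: if_cong)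
    finally show "(B x *\<^sub>v c) $ l = vec (dd x) (\<lambda>l. c $ (h x * D + l)) $ l" using l by simp
  qed (simp add: B_def)
  have "subsp T E" unfolding subsp_def E_def by auto
  moreover have "\<exists>c\<in>E. \<forall>x\<in>X. B x *\<^sub>v c = u x" if u: "\<forall>x\<in>X. u x \<in> carrier_vec (dd x)" for u
  proof
    define c where "c = vec T (\<lambda>t. if t mod D < dd (g (t div D)) then u (g (t div D)) $ (t mod D) else 0)"
    show "c \<in> E" unfolding c_def E_def by simp
    show "\<forall>x\<in>X. B x *\<^sub>v c = u x"
    proof
      fix x assume x: "x \<in> X"
      show "B x *\<^sub>v c = u x"
        using u x posT[OF x] dm[OF x] gh[OF x] unfolding Bc[OF x, of c, unfolded c_def, simplified] c_def
        by (intro eq_vecI) auto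
    qed
  qed
  moreover have "c = 0\<^sub>v T" if c: "c \<in> E" and z: "\<forall>x\<in>X. B x *\<^sub>v c = 0\<^sub>v (dd x)" for c
  proof (rule eq_vecI)
    show "dim_vec c = dim_vec (0\<^sub>v T)" using c unfolding E_def by auto
    fix t assume "t < dim_vec (0\<^sub>v T)"
    then have t: "t < T" by simp
    define x where "x = g (t div D)"
    have x: "x \<in> X" "h x = t div D" using gX hg tdec[OF t] unfolding x_def by auto
    show "c $ t = 0\<^sub>v T $ t"
    proof (cases "t mod D < dd x")
      case True
      have "c $ (h x * D + t mod D) = (B x *\<^sub>v c) $ (t mod D)"
        using Bc[OF x(1)] c True unfolding E_def by simp
      then show ?thesis using z x tdec[OF t] True t by simp
    next
      case False
      then show ?thesis using c t unfolding E_def x_def by auto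
    qed
  qed
  ultimately show ?thesis using that B by blast
qed

lemma subsp_sum_kernel:
  fixes L :: "'v \<Rightarrow> 'k::field mat"
  assumes E: "subsp T E" and L: "\<And>x. x \<in> X \<Longrightarrow> L x \<in> carrier_mat m T"
  shows "subsp T {c \<in> E. \<forall>i<m. (\<Sum>x\<in>X. (L x *\<^sub>v c) $ i) = 0}"
  unfolding subsp_def
proof (intro conjI ballI allI)
  show "{c \<in> E. \<forall>i<m. (\<Sum>x\<in>X. (L x *\<^sub>v c) $ i) = 0} \<subseteq> carrier_vec T" using subspD(1)[OF E] by auto
  show "0\<^sub>v T \<in> {c \<in> E. \<forall>i<m. (\<Sum>x\<in>X. (L x *\<^sub>v c) $ i) = 0}"
    using subspD(2)[OF E] mult_mat_vec_zero[OF L] L by (auto intro!: sum.neutral)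
next
  note Ed = subspD[OF E]
  fix c c' assume c: "c \<in> {c \<in> E. \<forall>i<m. (\<Sum>x\<in>X. (L x *\<^sub>v c) $ i) = 0}"
    and c': "c' \<in> {c \<in> E. \<forall>i<m. (\<Sum>x\<in>X. (L x *\<^sub>v c) $ i) = 0}"
  have cc: "c \<in> carrier_vec T" "c' \<in> carrier_vec T" using c c' Ed(1) by auto
  have "(\<Sum>x\<in>X. (L x *\<^sub>v (c + c')) $ i) = (\<Sum>x\<in>X. (L x *\<^sub>v c) $ i) + (\<Sum>x\<in>X. (L x *\<^sub>v c') $ i)"
    if "i < m" for i
  proof -
    have "(L x *\<^sub>v (c + c')) $ i = (L x *\<^sub>v c) $ i + (L x *\<^sub>v c') $ i" if "x \<in> X" for x
      using mult_add_distrib_mat_vec[OF L[OF that] cc] L[OF that] \<open>i < m\<close> by simp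
    then show ?thesis by (simp add: sum.distrib)
  qed
  then show "c + c' \<in> {c \<in> E. \<forall>i<m. (\<Sum>x\<in>X. (L x *\<^sub>v c) $ i) = 0}" using c c' Ed(3) by auto
next
  note Ed = subspD[OF E]
  fix a c assume c: "c \<in> {c \<in> E. \<forall>i<m. (\<Sum>x\<in>X. (L x *\<^sub>v c) $ i) = 0}"
  have cc: "c \<in> carrier_vec T" using c Ed(1) by auto
  have "(\<Sum>x\<in>X. (L x *\<^sub>v (a \<cdot>\<^sub>v c)) $ i) = a * (\<Sum>x\<in>X. (L x *\<^sub>v c) $ i)" if "i < m" for i
  proof -
    have "(L x *\<^sub>v (a \<cdot>\<^sub>v c)) $ i = a * (L x *\<^sub>v c) $ i" if "x \<in> X" for x
      using mult_mat_vec[OF L[OF that] cc] L[OF that] \<open>i < m\<close> by simp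
    then show ?thesis by (simp add: sum_distrib_left)
  qed
  then show "a \<cdot>\<^sub>v c \<in> {c \<in> E. \<forall>i<m. (\<Sum>x\<in>X. (L x *\<^sub>v c) $ i) = 0}" using c Ed(4) by auto
qed

definition parametrizes_kernel ::
  "'v set \<Rightarrow> ('v \<Rightarrow> 'k::field mat) \<Rightarrow> nat \<Rightarrow> ('v \<Rightarrow> nat) \<Rightarrow> nat \<Rightarrow> ('v \<Rightarrow> 'k mat) \<Rightarrow> bool" where
  "parametrizes_kernel X F m dd k G \<longleftrightarrow> (\<forall>x\<in>X. G x \<in> carrier_mat (dd x) k) \<and>
     (\<forall>v\<in>carrier_vec k. (\<forall>x\<in>X. G x *\<^sub>v v = 0\<^sub>v (dd x)) \<longrightarrow> v = 0\<^sub>v k) \<and>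
     (\<forall>u. (\<forall>x\<in>X. u x \<in> carrier_vec (dd x)) \<longrightarrow>
        ((\<forall>i<m. (\<Sum>x\<in>X. (F x *\<^sub>v u x) $ i) = 0) \<longleftrightarrow> (\<exists>v\<in>carrier_vec k. \<forall>x\<in>X. u x = G x *\<^sub>v v)))"

lemma kernel_parametrization_exists:
  fixes F :: "'v \<Rightarrow> 'k::field mat" and dd :: "'v \<Rightarrow> nat"
  assumes fin: "finite X" and F: "\<And>x. x \<in> X \<Longrightarrow> F x \<in> carrier_mat m (dd x)"
  shows "\<exists>k G. parametrizes_kernel X F m dd k G"
proof -
  obtain T :: nat and B :: "'v \<Rightarrow> 'k mat" and E :: "'k vec set" where B: "\<And>x. x \<in> X \<Longrightarrow> B x \<in> carrier_mat (dd x) T"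
    and E: "subsp T E" and Bsurj: "\<And>u. \<forall>x\<in>X. u x \<in> carrier_vec (dd x) \<Longrightarrow> \<exists>c\<in>E. \<forall>x\<in>X. B x *\<^sub>v c = u x"
    and Binj: "\<And>c. c \<in> E \<Longrightarrow> \<forall>x\<in>X. B x *\<^sub>v c = 0\<^sub>v (dd x) \<Longrightarrow> c = 0\<^sub>v T"
    using block_embedding[OF fin, of dd] by metis
  have L: "F x * B x \<in> carrier_mat m T" if "x \<in> X" for x using F[OF that] B[OF that] by simp
  define V where "V = {c \<in> E. \<forall>i<m. (\<Sum>x\<in>X. ((F x * B x) *\<^sub>v c) $ i) = 0}"
  have "subsp T V" unfolding V_def by (rule subsp_sum_kernel[OF E L])
  then obtain k K where K: "K \<in> carrier_mat T k" and Kinj: "\<forall>v\<in>carrier_vec k. K *\<^sub>v v = 0\<^sub>v T \<longrightarrow> v = 0\<^sub>v k"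
    and KV: "V = {K *\<^sub>v v | v. v \<in> carrier_vec k}"
    using subsp_column_space by blast
  have VE: "V \<subseteq> E" unfolding V_def by blast
  have Ec: "E \<subseteq> carrier_vec T" using subspD(1)[OF E] .
  have FB: "(F x * B x) *\<^sub>v c = F x *\<^sub>v (B x *\<^sub>v c)" if "x \<in> X" "c \<in> E" for x c
    using assoc_mult_mat_vec[OF F[OF that(1)] B[OF that(1)]] Ec that(2) by blast
  have BK: "(B x * K) *\<^sub>v v = B x *\<^sub>v (K *\<^sub>v v)" if "x \<in> X" "v \<in> carrier_vec k" for x v
    using assoc_mult_mat_vec[OF B[OF that(1)] K that(2)] .
  have "parametrizes_kernel X F m dd k (\<lambda>x. B x * K)"
    unfolding parametrizes_kernel_def
  proof (intro conjI ballI allI impI)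
    show "B x * K \<in> carrier_mat (dd x) k" if "x \<in> X" for x using B[OF that] K by simp
  next
    fix v assume v: "v \<in> carrier_vec k" and z: "\<forall>x\<in>X. (B x * K) *\<^sub>v v = 0\<^sub>v (dd x)"
    have "K *\<^sub>v v \<in> V" using KV v by blast
    then have "K *\<^sub>v v = 0\<^sub>v T" using Binj VE z BK v by auto
    then show "v = 0\<^sub>v k" using Kinj v by blast
  next
    fix u :: "'v \<Rightarrow> 'k vec" assume u: "\<forall>x\<in>X. u x \<in> carrier_vec (dd x)"
    show "(\<forall>i<m. (\<Sum>x\<in>X. (F x *\<^sub>v u x) $ i) = 0) \<longleftrightarrow> (\<exists>v\<in>carrier_vec k. \<forall>x\<in>X. u x = (B x * K) *\<^sub>v v)"
    proof
      assume s: "\<forall>i<m. (\<Sum>x\<in>X. (F x *\<^sub>v u x) $ i) = 0"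
      obtain c where c: "c \<in> E" "\<forall>x\<in>X. B x *\<^sub>v c = u x" using Bsurj[OF u] by blast
      have "c \<in> V" unfolding V_def using c s FB by simp
      then obtain v where v: "v \<in> carrier_vec k" "c = K *\<^sub>v v" using KV by blast
      then have "\<forall>x\<in>X. u x = (B x * K) *\<^sub>v v" using c BK by auto
      then show "\<exists>v\<in>carrier_vec k. \<forall>x\<in>X. u x = (B x * K) *\<^sub>v v" using v(1) by blast
    next
      assume "\<exists>v\<in>carrier_vec k. \<forall>x\<in>X. u x = (B x * K) *\<^sub>v v"
      then obtain v where v: "v \<in> carrier_vec k" "\<forall>x\<in>X. u x = B x *\<^sub>v (K *\<^sub>v v)" using BK by auto
      have "K *\<^sub>v v \<in> V" using KV v(1) by blast
      then show "\<forall>i<m. (\<Sum>x\<in>X. (F x *\<^sub>v u x) $ i) = 0" using v(2) FB VE unfolding V_def by auto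
    qed
  qed
  then show ?thesis by (intro exI)
qed

lemma parametrizes_kernel_dim_0:
  fixes G :: "'v \<Rightarrow> 'a::field mat"
  assumes G: "parametrizes_kernel X F m dd k G" and z: "\<forall>x\<in>X. dd x = 0"
  shows "k = 0"
proof (rule ccontr)
  assume k0: "k \<noteq> 0"
  define v :: "'a vec" where "v = unit_vec k 0"
  have vc: "v \<in> carrier_vec k" unfolding v_def by simp
  have "\<forall>x\<in>X. G x *\<^sub>v v = 0\<^sub>v (dd x)"
  proof
    fix x assume x: "x \<in> X"
    have "G x \<in> carrier_mat (dd x) k" using G x unfolding parametrizes_kernel_def by blast
    then have "G x *\<^sub>v v \<in> carrier_vec 0" using vc z x mult_mat_vec_carrier by fastforce
    then show "G x *\<^sub>v v = 0\<^sub>v (dd x)" using vec_carrier_0 z x by auto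
  qed
  then have "v = 0\<^sub>v k" using G vc unfolding parametrizes_kernel_def by blast
  then have "v $ 0 = 0\<^sub>v k $ 0" by simp
  then show False using k0 unfolding v_def by simp
qed

lemma reflection_exists:
  fixes M :: "('v, 'k::field) rep"
  assumes bip: "bipartite_orientation adj snk" and wf: "wf_rep adj snk M"
    and fin: "\<And>y. finite {x. adj y x}" and adj_sym: "\<And>x y. adj x y \<Longrightarrow> adj y x"
  shows "\<exists>N. is_reflection adj snk M N"
proof -
  have "\<exists>k G. parametrizes_kernel {x. adj y x} (\<lambda>x. mapv M x y) (dimv M y) (dimv M) k G" if "snk y" for y
  proof (rule kernel_parametrization_exists[OF fin])
    show "mapv M x y \<in> carrier_mat (dimv M y) (dimv M x)" if "x \<in> {x. adj y x}" for x
      using wf \<open>snk y\<close> adj_sym that unfolding wf_rep_def by blast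
  qed
  then obtain kf Gf where KG: "\<And>y. snk y \<Longrightarrow>
      parametrizes_kernel {x. adj y x} (\<lambda>x. mapv M x y) (dimv M y) (dimv M) (kf y) (Gf y)"
    by metis
  define N :: "('v, 'k) rep" where "N = \<lparr>dimv = (\<lambda>a. if snk a then kf a else dimv M a),
      mapv = (\<lambda>b a. if snk b then Gf b a else 0\<^sub>m 0 0)\<rparr>"
  have "supp N \<subseteq> supp M \<union> (\<Union>x\<in>supp M. {y. adj x y})"
  proof
    fix a assume a: "a \<in> supp N"
    show "a \<in> supp M \<union> (\<Union>x\<in>supp M. {y. adj x y})"
    proof (cases "snk a")
      case False then show ?thesis using a unfolding N_def supp_def by simp
    next
      case True
      then have "kf a \<noteq> 0" using a unfolding N_def supp_def by simp
      then obtain x where "adj a x" "dimv M x \<noteq> 0" using parametrizes_kernel_dim_0[OF KG[OF True]] by auto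
      then show ?thesis using adj_sym unfolding supp_def by blast
    qed
  qed
  moreover have "finite (supp M)" using wf unfolding wf_rep_def by blast
  ultimately have finN: "finite (supp N)" using fin by (auto intro: finite_subset)
  have wfN: "wf_rep adj (\<lambda>a. \<not> snk a) N"
    unfolding wf_rep_def
  proof (intro conjI allI impI)
    show "finite (supp N)" by (fact finN)
    fix x y assume xy: "adj y x \<and> \<not> snk x"
    then have "snk y" using bip unfolding bipartite_orientation_def by blast
    then show "mapv N y x \<in> carrier_mat (dimv N x) (dimv N y)"
      using KG[of y] xy unfolding N_def parametrizes_kernel_def by simp
  qed
  have "is_reflection adj snk M N"
    unfolding is_reflection_def
    using wfN KG unfolding N_def parametrizes_kernel_def by simp
  then show ?thesis by blast
qed

lemma card_ge_3_obtain:
  assumes "finite A" "3 \<le> card A"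
  obtains a b c where "a \<in> A" "b \<in> A" "c \<in> A" "a \<noteq> b" "b \<noteq> c" "a \<noteq> c"
proof -
  obtain a where a: "a \<in> A" using assms by fastforce
  have "2 \<le> card (A - {a})" using assms a by (simp add: card_Diff_singleton)
  then have "A - {a} \<noteq> {}" by (intro notI) simp
  then obtain b where b: "b \<in> A - {a}" by blast
  have "1 \<le> card (A - {a} - {b})" using assms a b by (simp add: card_Diff_singleton)
  then have "A - {a} - {b} \<noteq> {}" by (intro notI) simp
  then obtain c where c: "c \<in> A - {a} - {b}" by blast
  show ?thesis using that a b c by blast
qed

lemma regular_tree_three_neighbours:
  assumes "3 \<le> n" "regular_tree n adj"
  shows "\<exists>a b c. adj x a \<and> adj x b \<and> adj x c \<and> a \<noteq> b \<and> b \<noteq> c \<and> a \<noteq> c"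
proof -
  have "finite {y. adj x y}" "card {y. adj x y} = n" using assms(2) unfolding regular_tree_def by auto
  then obtain a b c where "a \<in> {y. adj x y}" "b \<in> {y. adj x y}" "c \<in> {y. adj x y}" "a \<noteq> b" "b \<noteq> c" "a \<noteq> c"
    using card_ge_3_obtain assms(1) by metis
  then show ?thesis by blast
qed

lemma shift_support_of_flow_module:
  fixes M :: "('v, 'k::field) rep"
  assumes n: "3 \<le> n" and rt: "regular_tree n adj" and bip: "bipartite_orientation adj snk"
    and wf: "wf_rep adj snk M" and ind: "indecomposable adj snk M"
    and fl: "flow_module adj M" and dp: "diam_path adj M p" and p0: "snk (p ! 0)"
  shows "shift_support adj snk (supp M) (shift adj snk M) (diam adj M) p"
proof -
  interpret tree adj using regular_tree_tree[OF rt] .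
  have fin: "\<And>y. finite {x. adj y x}" using rt unfolding regular_tree_def by auto
  obtain N where "is_reflection adj snk M N" using reflection_exists[OF bip wf fin adj_sym] by blast
  then have R: "is_reflection adj snk M (shift adj snk M)" unfolding shift_def by (rule someI)
  have pp: "is_path adj p" and pS: "set p \<subseteq> supp M" and lp: "length p - 1 = diam adj M"
    using dp unfolding diam_path_def by auto
  show ?thesis
  proof unfold_locales
    show "convex adj (supp M)" using supp_convex[OF bip wf ind] .
    show "\<And>a. \<not> snk a \<Longrightarrow> a \<in> supp (shift adj snk M) \<longleftrightarrow> a \<in> supp M"
      using reflection_dim_source[OF R] unfolding supp_def by simp
    show "\<And>y x. snk y \<Longrightarrow> y \<notin> supp M \<Longrightarrow> adj y x \<Longrightarrow> x \<in> supp M \<Longrightarrow> y \<in> supp (shift adj snk M)"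
      using reflection_supp_next_to_supp[OF R bip] unfolding supp_def by blast
    show "\<And>y x1 x2. snk y \<Longrightarrow> y \<in> supp M \<Longrightarrow> adj y x1 \<Longrightarrow> adj y x2 \<Longrightarrow> x1 \<noteq> x2 \<Longrightarrow>
        x1 \<in> supp M \<Longrightarrow> x2 \<in> supp M \<Longrightarrow> y \<in> supp (shift adj snk M)"
      using reflection_supp_between_supp[OF R bip wf ind fin] unfolding supp_def by blast
    have "finite (supp M)" using wf unfolding wf_rep_def by blast
    then show "diam_bound adj (supp M) (diam adj M)" using diam_bound_diam[OF diam_bound_card] by blast
    show "length p = Suc (diam adj M)" using lp is_pathD(1)[OF pp] by (cases p) auto
    show "odd (diam adj M)" using fl unfolding flow_module_def .
  qed (use bip pp pS p0 regular_tree_three_neighbours[OF n rt] in auto)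
qed

theorem mainTheorem8:
  fixes n :: nat and adj :: "'v \<Rightarrow> 'v \<Rightarrow> bool" and snk :: "'v \<Rightarrow> bool"
    and M :: "('v, 'k::field) rep" and p :: "'v list"
  assumes "3 \<le> n"
    and "regular_tree n adj"
    and "bipartite_orientation adj snk"
    and "wf_rep adj snk M"
    and "indecomposable adj snk M"
    and "regular_rep adj snk M"
    and "flow_module adj M"
    and "diam_path adj M p"
    and "snk (p ! 0)"
    and "\<not> snk (p ! diam adj M)"
  shows "diam adj M \<le> diam adj (shift adj snk M) \<and>
         diam adj (shift adj snk M) \<le> diam adj M + 1 \<and>
         (diam adj (shift adj snk M) = diam adj M \<longrightarrow>
            flow_module adj (shift adj snk M) \<and>
            (\<forall>b. adj (p ! diam adj M) b \<and> b \<noteq> p ! (diam adj M - 1) \<longrightarrow>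
                 diam_path adj (shift adj snk M) (tl p @ [b])) \<and>
            center adj (shift adj snk M) = {p ! (diam adj M div 2 + 1), p ! (diam adj M div 2 + 2)}) \<and>
         (diam adj (shift adj snk M) = diam adj M + 1 \<longrightarrow>
            source_module adj (\<lambda>a. \<not> snk a) (shift adj snk M) \<and>
            center adj (shift adj snk M) = {p ! (diam adj M div 2 + 1)})"
  using shift_support.shift_diam_center[OF shift_support_of_flow_module[OF assms(1-5,7-9)]] .

end
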